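(* Let $K\subset S^3$ be an oriented knot, with meridian $m$ and (Seifert-framed) longitude $l$ in $\pi_1(S^3\setminus K)$. Suppose that for some $m_0\ge 2$ there is a group homomorphism $\rho:\pi_1(S^3\setminus K)\to GL_{m_0}(\mathbb{C})$ such that \[ \rho(m)=\mathrm{diag}(\mu_0,1,1,\dots,1),\qquad \rho(l)=\mathrm{diag}(\lambda_0,\ast,\ast,\dots,\ast), \] where the asterisks denote arbitrary complex numbers. Then the knot DGA $(\mathcal{A},\partial)$ of $K$ (computed from any braid $B$ whose closure is $K$) has an augmentation $\epsilon$ to $\mathbb{C}$ with $(\epsilon(\lambda),\epsilon(\mu),\epsilon(U))=(\lambda_0,\mu_0,1)$.
   Context: Braid group $B_n$ has generators $\sigma_1,\dots,\sigma_{n-1}$. Let $\mathcal{A}_n$ be the free noncommutative unital algebra over $\mathbb{Z}$ on generators $a_{ij}$, $1\le i,j\le n$, $i\neq j$. The braid homomorphism $\phi:B_n\to\mathrm{Aut}(\mathcal{A}_n)$ is defined on generators by: $\phi_{\sigma_k}(a_{ij})=a_{ij}$ for $i,j\ne k,k+1$; $a_{k+1,i}\mapsto a_{ki}$ and $a_{i,k+1}\mapsto a_{ik}$ for $i\ne k,k+1$; $a_{k,k+1}\mapsto -a_{k+1,k}$; $a_{k+1,k}\mapsto -a_{k,k+1}$; $a_{ki}\mapsto a_{k+1,i}-a_{k+1,k}a_{ki}$ and $a_{ik}\mapsto a_{i,k+1}-a_{ik}a_{k,k+1}$ for $i\ne k,k+1$ (this extends to a homomorphism on $B_n$). For $B\in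 B_n$, view $B\in B_{n+1}$ by adding an extra noninteracting strand labeled $*$ (index $n+1$), and define $n\times n$ matrices $\Phi^L_B,\Phi^R_B$ over $\mathcal{A}_n$ by $\phi_B(a_{i*})=\sum_{j=1}^n(\Phi^L_B)_{ij}a_{j*}$ and $\phi_B(a_{*i})=\sum_{j=1}^n a_{*j}(\Phi^R_B)_{ji}$ for $1\le i\le n$. The knot DGA of $K$ (closure of $B\in B_n$) is the free noncommutative unital algebra $\mathcal{A}$ over $R=\mathbb{Z}[\lambda^{\pm1},\mu^{\pm1},U^{\pm1}]$ (coefficients central, degree $0$) on generators $a_{ij}$ ($i\ne j$, degree $0$), $b_{ij}$ ($i\ne j$, degree $1$), $c_{ij},d_{ij}$ ($1\le i,j\le n$, degree $1$), $e_{ij},f_{ij}$ ($1\le i,j\le n$, degree $2$). Form $n\times n$ matrices: $\mathbf{C},\mathbf{D},\mathbf{E},\mathbf{F}$ with entries $c_{ij},d_{ij},e_{ij},f_{ij}$; $\mathbf{A}_{ij}=a_{ij}$ ($i<j$), $-\mu a_{ij}$ ($i>j$), $1-\mu$ ($i=j$); $\mathbf{B}_{ij}=b_{ij}$ ($i<j$), $-\mu b_{ij}$ ($i>j$), $0$ ($i=j$); $\hat{\mathbf{A}}_{ij}=Ua_{ij}$ ($i<j$), $-\mu a_{ij}$ ($i>j$), $U-\mu$ ($i=j$); $\hat{\mathbf{B}}_{ij}=Ub_{ij}$ ($i<j$), $-\mu b_{ij}$ ($i>j$), $0$ ($i=j$). Let $\mathbf{\Lambda}=\mathrm{diag}(\lambda\mu^wU^{-(w-n+1)/2},1,\dots,1)$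 where $w$ is the writhe of $B$ (sum of exponents in the braid word). $\phi_B(\mathbf{A})$ denotes the matrix obtained by applying $\phi_B$ (extended $R$-linearly) to each entry of $\mathbf{A}$. The differential $\partial$ (degree $-1$, $R$-linear, signed Leibniz rule) is given entrywise by: $\partial\mathbf{A}=0$, $\partial\mathbf{B}=\mathbf{A}-\mathbf{\Lambda}\phi_B(\mathbf{A})\mathbf{\Lambda}^{-1}$, $\partial\mathbf{C}=\hat{\mathbf{A}}-\mathbf{\Lambda}\Phi^L_B\mathbf{A}$, $\partial\mathbf{D}=\mathbf{A}-\hat{\mathbf{A}}\Phi^R_B\mathbf{\Lambda}^{-1}$, $\partial\mathbf{E}=\hat{\mathbf{B}}-\mathbf{C}-\mathbf{\Lambda}\Phi^L_B\mathbf{D}$, $\partial\mathbf{F}=\mathbf{B}-\mathbf{D}-\mathbf{C}\Phi^R_B\mathbf{\Lambda}^{-1}$. An augmentation of $(\mathcal{A},\partial)$ to $\mathbb{C}$ is a unital ring homomorphism $\epsilon:\mathcal{A}\to\mathbb{C}$ with $\epsilon\circ\partial=0$ and $\epsilon(a)=0$ for every homogeneous element $a$ of nonzero degree; in particular it restricts to a ring map $R\to\mathbb{C}$ determined by $(\epsilon(\lambda),\epsilon(\mu),\epsilon(U))$. *)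

theory Defs
  imports Complex_Main "Jordan_Normal_Form.Matrix"
begin

text \<open>A braid word in B_n is a list of letters (k, True) = sigma_k and
  (k, False) = sigma_k^(-1), with 1 <= k <= n-1.  Strands are indexed 1..n.\<close>

type_synonym braid = "(nat \<times> bool) list"

definition valid_braid :: "nat \<Rightarrow> braid \<Rightarrow> bool" where
  "valid_braid n B \<longleftrightarrow> (\<forall>(k, s) \<in> set B. 1 \<le> k \<and> k < n)"

definition writhe :: "braid \<Rightarrow> int" where
  "writhe B = (\<Sum>(k, s) \<leftarrow> B. if s then 1 else -1)"

definition swap_strand :: "nat \<Rightarrow> nat \<Rightarrow> nat" where
  "swap_strand k j = (if j = k then k + 1 else if j = k + 1 then k else j)"

text \<open>Permutation of the strands induced by the braid (for the composite
  homeomorphism h_B = h_{s_1} o ... o h_{s_m}).\<close>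
definition braid_perm :: "braid \<Rightarrow> nat \<Rightarrow> nat" where
  "braid_perm B = foldr (\<lambda>(k, s) f. swap_strand k \<circ> f) B id"

text \<open>The closure of B in B_n is a knot (one component) iff the
  strand permutation is an n-cycle.\<close>
definition closure_is_knot :: "nat \<Rightarrow> braid \<Rightarrow> bool" where
  "closure_is_knot n B \<longleftrightarrow> 1 \<le> n \<and>
     (\<forall>j \<in> {1..n}. \<exists>i < n. (braid_perm B ^^ i) 1 = j)"

text \<open>Free group words on x_1, x_2, ...: letters (i, True) = x_i,
  (i, False) = x_i^(-1); a word is the product from left to right.\<close>
type_synonym fword = "(nat \<times> bool) list"

definition finv :: "fword \<Rightarrow> fword" where
  "finv w = rev (map (\<lambda>(i, e). (i, \<not> e)) w)"

definition artin_gen :: "nat \<Rightarrow> bool \<Rightarrow> nat \<Rightarrow> fword" where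
  "artin_gen k s i =
     (if s then
        (if i = k then [(k, True), (k + 1, True), (k, False)]
         else if i = k + 1 then [(k, True)] else [(i, True)])
      else
        (if i = k then [(k + 1, True)]
         else if i = k + 1 then [(k + 1, False), (k, True), (k + 1, True)]
         else [(i, True)]))"

definition artin_word :: "nat \<Rightarrow> bool \<Rightarrow> fword \<Rightarrow> fword" where
  "artin_word k s w =
     concat (map (\<lambda>(i, e). if e then artin_gen k s i else finv (artin_gen k s i)) w)"

definition artin_braid :: "braid \<Rightarrow> fword \<Rightarrow> fword" where
  "artin_braid B w = foldr (\<lambda>(k, s) v. artin_word k s v) B w"

text \<open>Action on arcs from the base point to the blackboard push-off points
  p'_j of the punctures: h_B(gamma'_j) = w_j gamma'_{pi_B(j)} is encoded by
  arcs B j = (w_j, pi_B j).\<close>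
definition arc_corr :: "nat \<Rightarrow> bool \<Rightarrow> nat \<Rightarrow> fword" where
  "arc_corr k s p =
     (if s then (if p = k then [(k, True)] else [])
      else (if p = k + 1 then [(k + 1, False)] else []))"

definition arcs :: "braid \<Rightarrow> nat \<Rightarrow> fword \<times> nat" where
  "arcs B j = foldr (\<lambda>(k, s) (w, p). (artin_word k s w @ arc_corr k s p, swap_strand k p))
                    B ([], j)"

text \<open>Blackboard longitude (parallel push-off of the closure through strand 1),
  and the Seifert-framed longitude l = l_bb * x_1^(-w).\<close>
definition blackboard_longitude :: "nat \<Rightarrow> braid \<Rightarrow> fword" where
  "blackboard_longitude n B =
     concat (map (\<lambda>i. fst (arcs B ((braid_perm B ^^ i) 1))) [0..<n])"

definition meridian_word :: fword where
  "meridian_word = [(1, True)]"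

definition longitude_word :: "nat \<Rightarrow> braid \<Rightarrow> fword" where
  "longitude_word n B = blackboard_longitude n B @
     (if 0 \<le> writhe B then replicate (nat (writhe B)) (1, False)
      else replicate (nat (- writhe B)) (1, True))"

definition mat_inv :: "nat \<Rightarrow> complex mat \<Rightarrow> complex mat" where
  "mat_inv m A = (SOME C. C \<in> carrier_mat m m \<and> A * C = 1\<^sub>m m \<and> C * A = 1\<^sub>m m)"

definition eval_fword :: "nat \<Rightarrow> (nat \<Rightarrow> complex mat) \<Rightarrow> fword \<Rightarrow> complex mat" where
  "eval_fword m X w =
     foldl (\<lambda>R (i, e). R * (if e then X i else mat_inv m (X i))) (1\<^sub>m m) w"

text \<open>A group homomorphism rho from the knot group
  pi_1(S^3 - K) = < x_1..x_n | x_i = phi_B(x_i) > of the closure K of B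
  to GL_m(C), given by the images X i = rho(x_i).\<close>
definition knot_group_rep :: "nat \<Rightarrow> braid \<Rightarrow> nat \<Rightarrow> (nat \<Rightarrow> complex mat) \<Rightarrow> bool" where
  "knot_group_rep n B m X \<longleftrightarrow>
     (\<forall>i \<in> {1..n}. X i \<in> carrier_mat m m \<and> invertible_mat (X i)) \<and>
     (\<forall>i \<in> {1..n}. eval_fword m X (artin_braid B [(i, True)]) = X i)"

datatype gen = Ga nat nat | Gb nat nat | Gc nat nat | Gd nat nat | Ge nat nat | Gf nat nat

fun gdeg :: "gen \<Rightarrow> nat" where
  "gdeg (Ga i j) = 0" | "gdeg (Gb i j) = 1" | "gdeg (Gc i j) = 1"
| "gdeg (Gd i j) = 1" | "gdeg (Ge i j) = 2" | "gdeg (Gf i j) = 2"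

fun gen_in :: "nat \<Rightarrow> gen \<Rightarrow> bool" where
  "gen_in n (Ga i j) = (i \<in> {1..n} \<and> j \<in> {1..n} \<and> i \<noteq> j)"
| "gen_in n (Gb i j) = (i \<in> {1..n} \<and> j \<in> {1..n} \<and> i \<noteq> j)"
| "gen_in n (Gc i j) = (i \<in> {1..n} \<and> j \<in> {1..n})"
| "gen_in n (Gd i j) = (i \<in> {1..n} \<and> j \<in> {1..n})"
| "gen_in n (Ge i j) = (i \<in> {1..n} \<and> j \<in> {1..n})"
| "gen_in n (Gf i j) = (i \<in> {1..n} \<and> j \<in> {1..n})"

text \<open>Terms denoting elements of the free noncommutative unital algebra over
  R = Z[lambda^(+-1), mu^(+-1), U^(+-1)] (every element is denoted by a term).\<close>
datatype dterm = Gen gen | Cst int | Lam | LamI | Mu | MuI | Uu | UuI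
  | Add dterm dterm | Mul dterm dterm

definition Neg :: "dterm \<Rightarrow> dterm" where "Neg t = Mul (Cst (-1)) t"
definition Sub :: "dterm \<Rightarrow> dterm \<Rightarrow> dterm" where "Sub s t = Add s (Neg t)"

fun tpow :: "dterm \<Rightarrow> dterm \<Rightarrow> int \<Rightarrow> dterm" where
  "tpow x xi k = (if k \<ge> 0 then foldr Mul (replicate (nat k) x) (Cst 1)
                   else foldr Mul (replicate (nat (- k)) xi) (Cst 1))"

fun all_gens :: "(gen \<Rightarrow> bool) \<Rightarrow> dterm \<Rightarrow> bool" where
  "all_gens P (Gen g) = P g"
| "all_gens P (Add s t) = (all_gens P s \<and> all_gens P t)"
| "all_gens P (Mul s t) = (all_gens P s \<and> all_gens P t)"
| "all_gens P _ = True"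

text \<open>Evaluation = the unique unital ring homomorphism into C determined by
  its values on the generators and on lambda, mu, U.\<close>
fun teval :: "(gen \<Rightarrow> complex) \<Rightarrow> complex \<Rightarrow> complex \<Rightarrow> complex \<Rightarrow> dterm \<Rightarrow> complex" where
  "teval e l m u (Gen g) = e g"
| "teval e l m u (Cst c) = of_int c"
| "teval e l m u Lam = l"
| "teval e l m u LamI = inverse l"
| "teval e l m u Mu = m"
| "teval e l m u MuI = inverse m"
| "teval e l m u Uu = u"
| "teval e l m u UuI = inverse u"
| "teval e l m u (Add s t) = teval e l m u s + teval e l m u t"
| "teval e l m u (Mul s t) = teval e l m u s * teval e l m u t"

fun subst_a :: "(nat \<Rightarrow> nat \<Rightarrow> dterm) \<Rightarrow> dterm \<Rightarrow> dterm" where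
  "subst_a f (Gen (Ga i j)) = f i j"
| "subst_a f (Add s t) = Add (subst_a f s) (subst_a f t)"
| "subst_a f (Mul s t) = Mul (subst_a f s) (subst_a f t)"
| "subst_a f t = t"

definition a :: "nat \<Rightarrow> nat \<Rightarrow> dterm" where "a i j = Gen (Ga i j)"

text \<open>phi_{sigma_k} (s = True) and its inverse phi_{sigma_k^(-1)} (s = False)
  on the generators a_ij.\<close>
definition phi_gen :: "nat \<Rightarrow> bool \<Rightarrow> nat \<Rightarrow> nat \<Rightarrow> dterm" where
  "phi_gen k s i j =
    (if i = k \<and> j = k + 1 then Neg (a (k + 1) k)
     else if i = k + 1 \<and> j = k then Neg (a k (k + 1))
     else if s then
       (if i = k + 1 then a k j
        else if j = k + 1 then a i k
        else if i = k then Sub (a (k + 1) j) (Mul (a (k + 1) k) (a k j))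
        else if j = k then Sub (a i (k + 1)) (Mul (a i k) (a k (k + 1)))
        else a i j)
     else
       (if i = k then a (k + 1) j
        else if j = k then a i (k + 1)
        else if i = k + 1 then Sub (a k j) (Mul (a k (k + 1)) (a (k + 1) j))
        else if j = k + 1 then Sub (a i k) (Mul (a i (k + 1)) (a (k + 1) k))
        else a i j))"

definition phi_braid :: "braid \<Rightarrow> dterm \<Rightarrow> dterm" where
  "phi_braid B t = foldr (\<lambda>(k, s) v. subst_a (phi_gen k s) v) B t"

text \<open>Coefficient extraction (phi_B(a_{i*}) is linear in the a_{j*}, each
  monomial having exactly one factor a_{j*}; the product clause is exact since
  the factor without a star-generator contributes 0): phi_B(a_{i*}) = sum_j (PhiL)_ij a_{j*} and
  phi_B(a_{*i}) = sum_j a_{*j} (PhiR)_ji, with * = strand n+1.\<close>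
fun coeffL :: "nat \<Rightarrow> nat \<Rightarrow> dterm \<Rightarrow> dterm" where
  "coeffL st j (Gen (Ga i k)) = (if i = j \<and> k = st then Cst 1 else Cst 0)"
| "coeffL st j (Add s t) = Add (coeffL st j s) (coeffL st j t)"
| "coeffL st j (Mul s t) = Add (Mul (coeffL st j s) t) (Mul s (coeffL st j t))"
| "coeffL st j t = Cst 0"

fun coeffR :: "nat \<Rightarrow> nat \<Rightarrow> dterm \<Rightarrow> dterm" where
  "coeffR st j (Gen (Ga k i)) = (if i = j \<and> k = st then Cst 1 else Cst 0)"
| "coeffR st j (Add s t) = Add (coeffR st j s) (coeffR st j t)"
| "coeffR st j (Mul s t) = Add (Mul (coeffR st j s) t) (Mul s (coeffR st j t))"
| "coeffR st j t = Cst 0"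

definition PhiL :: "nat \<Rightarrow> braid \<Rightarrow> nat \<Rightarrow> nat \<Rightarrow> dterm" where
  "PhiL n B i j = coeffL (n + 1) j (phi_braid B (a i (n + 1)))"

definition PhiR :: "nat \<Rightarrow> braid \<Rightarrow> nat \<Rightarrow> nat \<Rightarrow> dterm" where
  "PhiR n B j i = coeffR (n + 1) j (phi_braid B (a (n + 1) i))"

text \<open>n x n matrices of terms, indexed by 1..n.\<close>
type_synonym tmat = "nat \<Rightarrow> nat \<Rightarrow> dterm"

definition mmul :: "nat \<Rightarrow> tmat \<Rightarrow> tmat \<Rightarrow> tmat" where
  "mmul n X Y i j = foldr Add (map (\<lambda>k. Mul (X i k) (Y k j)) [1..<n + 1]) (Cst 0)"

definition mminus :: "tmat \<Rightarrow> tmat \<Rightarrow> tmat" where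
  "mminus X Y i j = Sub (X i j) (Y i j)"

definition Amat :: tmat where
  "Amat i j = (if i < j then a i j else if j < i then Mul (Neg Mu) (a i j) else Sub (Cst 1) Mu)"
definition Ahat :: tmat where
  "Ahat i j = (if i < j then Mul Uu (a i j) else if j < i then Mul (Neg Mu) (a i j) else Sub Uu Mu)"
definition Bhat :: tmat where
  "Bhat i j = (if i < j then Mul Uu (Gen (Gb i j)) else if j < i then Mul (Neg Mu) (Gen (Gb i j))
               else Cst 0)"
definition Bmat :: tmat where
  "Bmat i j = (if i < j then Gen (Gb i j) else if j < i then Mul (Neg Mu) (Gen (Gb i j))
               else Cst 0)"
definition Cmat :: tmat where "Cmat i j = Gen (Gc i j)"
definition Dmat :: tmat where "Dmat i j = Gen (Gd i j)"

definition Lam_exp :: "nat \<Rightarrow> braid \<Rightarrow> int" where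
  "Lam_exp n B = - ((writhe B - int n + 1) div 2)"

definition Lmat :: "nat \<Rightarrow> braid \<Rightarrow> tmat" where
  "Lmat n B i j = (if i = j then (if i = 1 then
      Mul Lam (Mul (tpow Mu MuI (writhe B)) (tpow Uu UuI (Lam_exp n B))) else Cst 1) else Cst 0)"

definition Linv :: "nat \<Rightarrow> braid \<Rightarrow> tmat" where
  "Linv n B i j = (if i = j then (if i = 1 then
      Mul LamI (Mul (tpow MuI Mu (writhe B)) (tpow UuI Uu (Lam_exp n B))) else Cst 1) else Cst 0)"

definition dB_rhs :: "nat \<Rightarrow> braid \<Rightarrow> tmat" where
  "dB_rhs n B = mminus Amat (mmul n (mmul n (Lmat n B) (\<lambda>i j. phi_braid B (Amat i j))) (Linv n B))"
definition dC_rhs :: "nat \<Rightarrow> braid \<Rightarrow> tmat" where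
  "dC_rhs n B = mminus Ahat (mmul n (mmul n (Lmat n B) (PhiL n B)) Amat)"
definition dD_rhs :: "nat \<Rightarrow> braid \<Rightarrow> tmat" where
  "dD_rhs n B = mminus Amat (mmul n (mmul n Ahat (PhiR n B)) (Linv n B))"
definition dE_rhs :: "nat \<Rightarrow> braid \<Rightarrow> tmat" where
  "dE_rhs n B = mminus (mminus Bhat Cmat) (mmul n (mmul n (Lmat n B) (PhiL n B)) Dmat)"
definition dF_rhs :: "nat \<Rightarrow> braid \<Rightarrow> tmat" where
  "dF_rhs n B = mminus (mminus Bmat Dmat) (mmul n (mmul n Cmat (PhiR n B)) (Linv n B))"

text \<open>Differential of the generators (the entries of dB equal the entries of
  Bmat, which are b_ij for i<j and -mu b_ij for i>j; R-linearity gives the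
  formula for b_ij with i > j).\<close>
fun dgen :: "nat \<Rightarrow> braid \<Rightarrow> gen \<Rightarrow> dterm" where
  "dgen n B (Ga i j) = Cst 0"
| "dgen n B (Gb i j) = (if i < j then dB_rhs n B i j else Mul (Neg MuI) (dB_rhs n B i j))"
| "dgen n B (Gc i j) = dC_rhs n B i j"
| "dgen n B (Gd i j) = dD_rhs n B i j"
| "dgen n B (Ge i j) = dE_rhs n B i j"
| "dgen n B (Gf i j) = dF_rhs n B i j"

fun par :: "dterm \<Rightarrow> dterm" where
  "par (Gen g) = (if odd (gdeg g) then Neg (Gen g) else Gen g)"
| "par (Add s t) = Add (par s) (par t)"
| "par (Mul s t) = Mul (par s) (par t)"
| "par t = t"

fun dga_d :: "nat \<Rightarrow> braid \<Rightarrow> dterm \<Rightarrow> dterm" where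
  "dga_d n B (Gen g) = dgen n B g"
| "dga_d n B (Add s t) = Add (dga_d n B s) (dga_d n B t)"
| "dga_d n B (Mul s t) = Add (Mul (dga_d n B s) t) (Mul (par s) (dga_d n B t))"
| "dga_d n B t = Cst 0"

text \<open>An augmentation of the knot DGA of (the closure of) B to C with
  (eps(lambda), eps(mu), eps(U)) = (l, m, u): a unital ring homomorphism,
  given by its values e on the generators, killing all generators of nonzero
  degree (equivalently all homogeneous elements of nonzero degree) and with
  eps o d = 0 on the whole algebra.\<close>
definition is_augmentation ::
  "nat \<Rightarrow> braid \<Rightarrow> (gen \<Rightarrow> complex) \<Rightarrow> complex \<Rightarrow> complex \<Rightarrow> complex \<Rightarrow> bool" where
  "is_augmentation n B e l m u \<longleftrightarrow>
     l \<noteq> 0 \<and> m \<noteq> 0 \<and> u \<noteq> 0 \<and>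
     (\<forall>g. gen_in n g \<longrightarrow> gdeg g \<noteq> 0 \<longrightarrow> e g = 0) \<and>
     (\<forall>t. all_gens (gen_in n) t \<longrightarrow> teval e l m u (dga_d n B t) = 0)"

end

theory Submission
  imports Defs
begin

text \<open>
  Write rho(x_i) = M_i D M_i^(-1) with D = diag(mu0, 1, ..., 1), choosing a frame M_i for every
  strand, and send a_ij to (1 - mu0) times the (0,0) entry of M_i^(-1) M_j, suitably rescaled for
  i > j. The braid generators act on frames as the Artin action acts on meridians, and on these
  cord values the action reproduces phi_{sigma_k}; so evaluating phi_B(t) amounts to evaluating t on
  the frame moved by B. Choosing the frames by following the knot from strand 1, the braid fixes all
  frames but the first, which becomes the image of the longitude corrected by mu0^(-w); the
  hypothesis on rho(l) makes this matrix block diagonal, so the braid rescales the cord values exactly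
  by the entries of Lambda, and the relations for dB follow. Adding an auxiliary strand that carries
  the frame of strand j gives those for dC and dD, and dE, dF vanish because all generators of
  positive degree are sent to 0.
\<close>

lemma sum_mult_delta_right:
  "finite S \<Longrightarrow> j \<in> S \<Longrightarrow> (\<Sum>l\<in>S. f l * (if l = j then c l else 0)) = f j * (c j :: 'a :: semiring_0)"
  by (simp add: if_distrib[of "\<lambda>x. f _ * x"] cong: if_cong)

lemma sum_mult_delta_left:
  "finite S \<Longrightarrow> j \<in> S \<Longrightarrow> (\<Sum>l\<in>S. (if j = l then c l else 0) * f l) = (c j :: 'a :: semiring_0) * f j"
  by (simp add: if_distrib[of "\<lambda>x. x * f _"] cong: if_cong)

section \<open>Invertible matrices\<close>

locale gl_setting =
  fixes m :: nat
  assumes dim_pos: "0 < m"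
begin

abbreviation minv :: "complex mat \<Rightarrow> complex mat" where "minv \<equiv> mat_inv m"

definition GL :: "complex mat set" where
  "GL = {A \<in> carrier_mat m m. \<exists>B \<in> carrier_mat m m. A * B = 1\<^sub>m m \<and> B * A = 1\<^sub>m m}"

lemma GL_carrier: "A \<in> GL \<Longrightarrow> A \<in> carrier_mat m m"
  unfolding GL_def by auto

lemma mult_carrier [simp]: "A \<in> carrier_mat m m \<Longrightarrow> B \<in> carrier_mat m m \<Longrightarrow> A * B \<in> carrier_mat m m"
  by auto

lemmas mult_assoc_m = assoc_mult_mat[of _ m m _ m _ m]

lemma minv_GL:
  assumes "A \<in> GL"
  shows minv_carrier [simp]: "minv A \<in> carrier_mat m m"
    and mult_minv [simp]: "A * minv A = 1\<^sub>m m"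
    and minv_mult [simp]: "minv A * A = 1\<^sub>m m"
proof -
  from assms obtain B where "B \<in> carrier_mat m m \<and> A * B = 1\<^sub>m m \<and> B * A = 1\<^sub>m m"
    unfolding GL_def by auto
  hence "minv A \<in> carrier_mat m m \<and> A * minv A = 1\<^sub>m m \<and> minv A * A = 1\<^sub>m m"
    unfolding mat_inv_def by (rule someI)
  thus "minv A \<in> carrier_mat m m" "A * minv A = 1\<^sub>m m" "minv A * A = 1\<^sub>m m" by auto
qed

lemma GL_cancel [simp]:
  assumes "A \<in> GL" "C \<in> carrier_mat m m"
  shows "A * (minv A * C) = C" "minv A * (A * C) = C"
proof -
  have A: "A \<in> carrier_mat m m" using GL_carrier[OF assms(1)] .
  have "A * (minv A * C) = (A * minv A) * C"
    by (rule assoc_mult_mat[OF A minv_carrier[OF assms(1)] assms(2), symmetric])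
  thus "A * (minv A * C) = C" using assms by (simp add: left_mult_one_mat)
  have "minv A * (A * C) = (minv A * A) * C"
    by (rule assoc_mult_mat[OF minv_carrier[OF assms(1)] A assms(2), symmetric])
  thus "minv A * (A * C) = C" using assms by (simp add: left_mult_one_mat)
qed

lemma minv_unique:
  assumes "A \<in> GL" "C \<in> carrier_mat m m" "A * C = 1\<^sub>m m"
  shows "minv A = C"
proof -
  have "minv A = minv A * (A * C)"
    using assms(1,3) right_mult_one_mat[OF minv_carrier[OF assms(1)]] by simp
  also have "\<dots> = C" using assms(1,2) by simp
  finally show ?thesis .
qed

lemma minv_in_GL: assumes "A \<in> GL" shows "minv A \<in> GL"
  unfolding GL_def using assms GL_carrier[OF assms] by (auto intro!: bexI[of _ A])

lemma minv_minv [simp]: "A \<in> GL \<Longrightarrow> minv (minv A) = A"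
  by (rule minv_unique[OF minv_in_GL]) (auto simp: GL_carrier)

lemma one_in_GL: "1\<^sub>m m \<in> GL"
  unfolding GL_def by (intro CollectI conjI bexI[of _ "1\<^sub>m m"]) auto

lemma minv_one [simp]: "minv (1\<^sub>m m) = 1\<^sub>m m"
  by (rule minv_unique[OF one_in_GL]) auto

lemma GL_mult:
  assumes "A \<in> GL" "B \<in> GL"
  shows mult_in_GL: "A * B \<in> GL" and minv_mult_distrib: "minv (A * B) = minv B * minv A"
proof -
  have c: "A \<in> carrier_mat m m" "B \<in> carrier_mat m m" using assms GL_carrier by auto
  have "(A * B) * (minv B * minv A) = A * (B * (minv B * minv A))"
    using c assms by (meson assoc_mult_mat minv_carrier mult_carrier_mat)
  hence r: "(A * B) * (minv B * minv A) = 1\<^sub>m m" using c assms by simp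
  have "(minv B * minv A) * (A * B) = minv B * (minv A * (A * B))"
    using c assms by (meson assoc_mult_mat minv_carrier mult_carrier_mat)
  hence l: "(minv B * minv A) * (A * B) = 1\<^sub>m m" using c assms by simp
  show "A * B \<in> GL" unfolding GL_def using c r l
    by (intro CollectI conjI bexI[of _ "minv B * minv A"]) (auto simp: assms)
  thus "minv (A * B) = minv B * minv A" using r c assms by (intro minv_unique) auto
qed

lemma invertible_mat_in_GL: "A \<in> carrier_mat m m \<Longrightarrow> invertible_mat A \<Longrightarrow> A \<in> GL"
proof -
  assume A: "A \<in> carrier_mat m m" and "invertible_mat A"
  then obtain B where "inverts_mat A B" "inverts_mat B A" unfolding invertible_mat_def by auto
  hence AB: "A * B = 1\<^sub>m m" and BA: "B * A = 1\<^sub>m (dim_row B)" using A unfolding inverts_mat_def by auto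
  have "dim_col B = m" using AB by (metis index_mult_mat(3) index_one_mat(3))
  moreover have "dim_row B = m" using BA A by (metis index_mult_mat(3) index_one_mat(3) carrier_matD(2))
  ultimately show "A \<in> GL" unfolding GL_def using A AB BA by auto
qed

lemma mult_mat_index_sum:
  assumes "A \<in> carrier_mat m m" "B \<in> carrier_mat m m" "i < m" "j < m"
  shows "(A * B) $$ (i, j) = (\<Sum>l<m. A $$ (i, l) * B $$ (l, j))"
  using assms by (simp add: scalar_prod_def row_def col_def lessThan_atLeast0)

definition diag_first :: "complex \<Rightarrow> complex mat" where
  "diag_first d = mat m m (\<lambda>(i, j). if i = j then (if i = 0 then d else 1) else 0)"

lemma diag_first_carrier [simp]: "diag_first d \<in> carrier_mat m m"
  unfolding diag_first_def by auto

lemma diag_first_dim [simp]: "dim_row (diag_first d) = m" "dim_col (diag_first d) = m"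
  unfolding diag_first_def by auto

lemma diag_first_index:
  "i < m \<Longrightarrow> j < m \<Longrightarrow> diag_first d $$ (i, j) = (if i = j then (if i = 0 then d else 1) else 0)"
  unfolding diag_first_def by simp

lemma mult_diag_first_index:
  assumes "A \<in> carrier_mat m m" "i < m" "j < m"
  shows "(A * diag_first d) $$ (i, j) = A $$ (i, j) * (if j = 0 then d else 1)"
proof -
  have "(A * diag_first d) $$ (i, j) = (\<Sum>l<m. A $$ (i, l) * (if l = j then (if j = 0 then d else 1) else 0))"
    using assms by (simp del: index_mult_mat add: mult_mat_index_sum diag_first_index cong: if_cong)
  thus ?thesis using assms by (simp add: sum_mult_delta_right)
qed

lemma diag_first_mult_index:
  assumes "A \<in> carrier_mat m m" "i < m" "j < m"
  shows "(diag_first d * A) $$ (i, j) = (if i = 0 then d else 1) * A $$ (i, j)"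
proof -
  have "(diag_first d * A) $$ (i, j) = (\<Sum>l<m. (if i = l then (if i = 0 then d else 1) else 0) * A $$ (l, j))"
    using assms by (simp del: index_mult_mat add: mult_mat_index_sum diag_first_index cong: if_cong)
  thus ?thesis using assms by (simp add: sum_mult_delta_left)
qed

lemma diag_first_mult: "diag_first c * diag_first d = diag_first (c * d)"
  by (rule eq_matI) (auto simp del: index_mult_mat(1) simp: diag_first_mult_index diag_first_index)

lemma diag_first_one: "diag_first 1 = 1\<^sub>m m"
  by (rule eq_matI) (auto simp: diag_first_index)

lemma diag_first_GL:
  assumes "d \<noteq> 0"
  shows diag_first_in_GL: "diag_first d \<in> GL"
    and minv_diag_first: "minv (diag_first d) = diag_first (inverse d)"
proof -
  have inv: "diag_first d * diag_first (inverse d) = 1\<^sub>m m" "diag_first (inverse d) * diag_first d = 1\<^sub>m m"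
    using assms by (auto simp: diag_first_mult diag_first_one)
  show "diag_first d \<in> GL" unfolding GL_def using inv by (intro CollectI conjI bexI) auto
  thus "minv (diag_first d) = diag_first (inverse d)" using inv by (intro minv_unique) auto
qed

lemma entry00_diag_first_between:
  assumes "A \<in> carrier_mat m m" "B \<in> carrier_mat m m"
  shows "(A * diag_first d * B) $$ (0, 0) = (A * B) $$ (0, 0) + (d - 1) * A $$ (0, 0) * B $$ (0, 0)"
proof -
  have "(A * diag_first d * B) $$ (0, 0) = (\<Sum>l<m. (A * diag_first d) $$ (0, l) * B $$ (l, 0))"
    using assms dim_pos by (simp del: index_mult_mat add: mult_mat_index_sum)
  also have "\<dots> = (\<Sum>l<m. A $$ (0, l) * B $$ (l, 0) + (if l = 0 then (d - 1) * A $$ (0, 0) * B $$ (0, 0) else 0))"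
    using assms dim_pos
    by (intro sum.cong) (auto simp del: index_mult_mat(1) simp: mult_diag_first_index algebra_simps)
  also have "\<dots> = (A * B) $$ (0, 0) + (d - 1) * A $$ (0, 0) * B $$ (0, 0)"
    using assms dim_pos by (simp del: index_mult_mat add: sum.distrib mult_mat_index_sum)
  finally show ?thesis .
qed

lemma entry00_conj_diag_first:
  assumes "A \<in> GL" "P \<in> GL" "C \<in> GL"
  shows "(minv A * (P * diag_first d * minv P) * C) $$ (0, 0) =
     (minv A * C) $$ (0, 0) + (d - 1) * (minv A * P) $$ (0, 0) * (minv P * C) $$ (0, 0)"
proof -
  have c: "A \<in> carrier_mat m m" "P \<in> carrier_mat m m" "C \<in> carrier_mat m m"
    using assms GL_carrier by auto
  have "minv A * (P * diag_first d * minv P) * C = (minv A * P) * diag_first d * (minv P * C)"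
    using c assms by (simp add: mult_assoc_m)
  moreover have "(minv A * P) * (minv P * C) = minv A * C"
    using c assms by (simp add: mult_assoc_m)
  ultimately show ?thesis using entry00_diag_first_between[of "minv A * P" "minv P * C" d] c assms by simp
qed

lemma conj_diag_first_GL:
  assumes "A \<in> GL" "d \<noteq> 0"
  shows conj_diag_first_in_GL: "A * diag_first d * minv A \<in> GL"
    and minv_conj_diag_first: "minv (A * diag_first d * minv A) = A * diag_first (inverse d) * minv A"
proof -
  have AD: "A * diag_first d \<in> GL" using mult_in_GL diag_first_in_GL assms by auto
  thus "A * diag_first d * minv A \<in> GL" using mult_in_GL minv_in_GL assms by auto
  have "minv (A * diag_first d * minv A) = A * minv (A * diag_first d)"
    using minv_mult_distrib minv_in_GL assms AD by simp
  also have "\<dots> = A * diag_first (inverse d) * minv A"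
    using assms GL_carrier diag_first_GL by (simp add: minv_mult_distrib mult_assoc_m)
  finally show "minv (A * diag_first d * minv A) = A * diag_first (inverse d) * minv A" .
qed

lemma conj_mult_diag_first:
  assumes "P \<in> GL" "Q \<in> GL"
  shows "(P * Q) * diag_first d * minv (P * Q) = P * (Q * diag_first d * minv Q) * minv P"
  using assms GL_carrier by (simp add: minv_mult_distrib mult_assoc_m)

end

section \<open>Free group words and the Artin action\<close>

lemma finv_append [simp]: "finv (u @ v) = finv v @ finv u"
  unfolding finv_def by simp

lemma finv_Nil [simp]: "finv [] = []"
  unfolding finv_def by simp

lemma finv_finv [simp]: "finv (finv u) = u"
  unfolding finv_def by (induction u) auto

lemma finv_single [simp]: "finv [(i, e)] = [(i, \<not> e)]"
  unfolding finv_def by simp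

lemma fst_set_finv [simp]: "fst ` set (finv w) = fst ` set w"
  unfolding finv_def by (induction w) auto

lemma artin_word_append [simp]: "artin_word k s (u @ v) = artin_word k s u @ artin_word k s v"
  unfolding artin_word_def by simp

lemma artin_word_Nil [simp]: "artin_word k s [] = []"
  unfolding artin_word_def by simp

lemma artin_word_Cons:
  "artin_word k s ((i, e) # u) = (if e then artin_gen k s i else finv (artin_gen k s i)) @ artin_word k s u"
  unfolding artin_word_def by simp

lemma artin_word_finv: "artin_word k s (finv u) = finv (artin_word k s u)"
proof (induction u)
  case (Cons x u)
  obtain i e where x: "x = (i, e)" by (cases x)
  have "finv (x # u) = finv u @ [(i, \<not> e)]" using finv_append[of "[x]" u] unfolding x by simp
  thus ?case using Cons unfolding x by (simp add: artin_word_def)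
qed simp

lemma artin_braid_Nil [simp]: "artin_braid [] w = w"
  unfolding artin_braid_def by simp

lemma artin_braid_Cons: "artin_braid ((k, s) # B) w = artin_word k s (artin_braid B w)"
  unfolding artin_braid_def by simp

lemma braid_perm_Nil [simp]: "braid_perm [] = id"
  unfolding braid_perm_def by simp

lemma braid_perm_Cons: "braid_perm ((k, s) # B) = swap_strand k \<circ> braid_perm B"
  unfolding braid_perm_def by simp

lemma arcs_Nil [simp]: "arcs [] j = ([], j)"
  unfolding arcs_def by simp

lemma arcs_Cons: "arcs ((k, s) # B) j =
   (artin_word k s (fst (arcs B j)) @ arc_corr k s (snd (arcs B j)), swap_strand k (snd (arcs B j)))"
  unfolding arcs_def by (simp split: prod.split)

lemma snd_arcs: "snd (arcs B j) = braid_perm B j"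
  by (induction B) (auto simp: arcs_Cons braid_perm_Cons)

lemma artin_gen_eq_arc_corr:
  "artin_gen k s p = arc_corr k s p @ [(swap_strand k p, True)] @ finv (arc_corr k s p)"
  unfolding artin_gen_def arc_corr_def swap_strand_def finv_def by auto

lemma artin_braid_generator:
  "artin_braid B [(j, True)] = fst (arcs B j) @ [(braid_perm B j, True)] @ finv (fst (arcs B j))"
proof (induction B)
  case (Cons x B)
  obtain k s where x: "x = (k, s)" by (cases x)
  show ?case using Cons unfolding x
    by (simp add: artin_braid_Cons arcs_Cons braid_perm_Cons artin_word_finv artin_word_Cons
                  snd_arcs artin_gen_eq_arc_corr)
qed simp

lemma swap_strand_swap_strand [simp]: "swap_strand k (swap_strand k j) = j"
  unfolding swap_strand_def by auto

lemma inj_braid_perm: "inj (braid_perm B)"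
proof (induction B)
  case (Cons x B)
  obtain k s where x: "x = (k, s)" by (cases x)
  have "inj (swap_strand k)" by (metis injI swap_strand_swap_strand)
  thus ?case using Cons inj_compose unfolding x braid_perm_Cons by blast
qed simp

lemma braid_perm_range:
  "valid_braid n B \<Longrightarrow> j \<in> {1..n} \<Longrightarrow> braid_perm B j \<in> {1..n}"
  by (induction B) (auto simp: valid_braid_def braid_perm_Cons swap_strand_def)

lemma fst_set_artin_word:
  assumes "1 \<le> k" "k < n" "fst ` set w \<subseteq> {1..n}"
  shows "fst ` set (artin_word k s w) \<subseteq> {1..n}"
  using assms(3)
proof (induction w)
  case (Cons x w)
  obtain i e where x: "x = (i, e)" by (cases x)
  have "i \<in> {1..n}" using Cons.prems x by simp
  hence "fst ` set (artin_gen k s i) \<subseteq> {1..n}"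
    using assms(1,2) unfolding artin_gen_def by auto
  thus ?case using Cons unfolding x artin_word_Cons by (cases e) (simp_all add: image_Un)
qed simp

lemma fst_set_arcs:
  assumes "valid_braid n B" "j \<in> {1..n}"
  shows "fst ` set (fst (arcs B j)) \<subseteq> {1..n}"
  using assms
proof (induction B)
  case (Cons x B)
  obtain k s where x: "x = (k, s)" by (cases x)
  have k: "1 \<le> k" "k < n" and vB: "valid_braid n B"
    using Cons.prems unfolding x valid_braid_def by auto
  have "fst ` set (artin_word k s (fst (arcs B j))) \<subseteq> {1..n}"
    using fst_set_artin_word[OF k] Cons.IH[OF vB Cons.prems(2)] .
  moreover have "fst ` set (arc_corr k s (snd (arcs B j))) \<subseteq> {1..n}"
    using k unfolding arc_corr_def by auto
  ultimately show ?case unfolding x arcs_Cons fst_conv set_append image_Un by blast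
qed simp

context gl_setting
begin

definition eval_letter :: "(nat \<Rightarrow> complex mat) \<Rightarrow> nat \<times> bool \<Rightarrow> complex mat" where
  "eval_letter X x = (if snd x then X (fst x) else minv (X (fst x)))"

lemma eval_letter_in_GL: "\<forall>i. X i \<in> GL \<Longrightarrow> eval_letter X x \<in> GL"
  unfolding eval_letter_def using minv_in_GL by auto

lemma eval_fword_Nil [simp]: "eval_fword m X [] = 1\<^sub>m m"
  unfolding eval_fword_def by simp

lemma eval_fword_snoc: "eval_fword m X (w @ [x]) = eval_fword m X w * eval_letter X x"
  unfolding eval_fword_def eval_letter_def by (cases x) simp

lemma eval_fword_in_GL: "\<forall>i. X i \<in> GL \<Longrightarrow> eval_fword m X w \<in> GL"
  by (induction w rule: rev_induct) (auto simp: eval_fword_snoc one_in_GL mult_in_GL eval_letter_in_GL)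

lemma eval_fword_append:
  assumes "\<forall>i. X i \<in> GL"
  shows "eval_fword m X (u @ v) = eval_fword m X u * eval_fword m X v"
proof (induction v rule: rev_induct)
  case Nil
  show ?case using right_mult_one_mat[OF GL_carrier[OF eval_fword_in_GL[OF assms]]] by simp
next
  case (snoc x v)
  thus ?case using GL_carrier eval_fword_in_GL[OF assms] eval_letter_in_GL[OF assms]
    by (simp add: eval_fword_snoc flip: append_assoc) (simp add: mult_assoc_m)
qed

lemma eval_fword_single: "\<forall>i. X i \<in> GL \<Longrightarrow> eval_fword m X [x] = eval_letter X x"
  using eval_fword_snoc[of X "[]" x] left_mult_one_mat[OF GL_carrier[OF eval_letter_in_GL]] by simp

lemma eval_fword_Cons:
  "\<forall>i. X i \<in> GL \<Longrightarrow> eval_fword m X (x # w) = eval_letter X x * eval_fword m X w"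
  using eval_fword_append[of X "[x]" w] by (simp add: eval_fword_single)

lemma eval_fword_finv:
  assumes "\<forall>i. X i \<in> GL"
  shows "eval_fword m X (finv w) = minv (eval_fword m X w)"
proof (induction w)
  case (Cons x w)
  obtain i e where x: "x = (i, e)" by (cases x)
  have "finv (x # w) = finv w @ [(i, \<not> e)]"
    using finv_append[of "[x]" w] unfolding x by simp
  moreover have "eval_letter X (i, \<not> e) = minv (eval_letter X x)"
    unfolding x eval_letter_def using assms by simp
  ultimately show ?case
    using Cons assms eval_letter_in_GL[OF assms] eval_fword_in_GL[OF assms]
    by (simp add: eval_fword_snoc eval_fword_Cons minv_mult_distrib)
qed simp

lemma eval_fword_cong:
  "(\<And>i. i \<in> fst ` set w \<Longrightarrow> X i = Y i) \<Longrightarrow> eval_fword m X w = eval_fword m Y w"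
  unfolding eval_fword_def by (induction w rule: rev_induct) auto

end

section \<open>Terms of the knot DGA\<close>

lemma teval_subst_a:
  "teval e l u v (subst_a f t) =
   teval (\<lambda>g. case g of Ga i j \<Rightarrow> teval e l u v (f i j) | _ \<Rightarrow> e g) l u v t"
proof (induction t)
  case (Gen g) thus ?case by (cases g) auto
qed auto

lemma teval_cong:
  "all_gens P t \<Longrightarrow> (\<And>g. P g \<Longrightarrow> e g = e' g) \<Longrightarrow> teval e l u v t = teval e' l u v t"
  by (induction t) auto

lemma all_gens_subst_a:
  "all_gens P t \<Longrightarrow> (\<And>i j. P (Ga i j) \<Longrightarrow> all_gens Q (f i j)) \<Longrightarrow>
   (\<And>g. P g \<Longrightarrow> (\<forall>i j. g \<noteq> Ga i j) \<Longrightarrow> Q g) \<Longrightarrow> all_gens Q (subst_a f t)"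
proof (induction t)
  case (Gen g) thus ?case by (cases g) auto
qed auto

lemma teval_funpow_Mul: "teval e l u v ((Mul x ^^ k) t) = teval e l u v x ^ k * teval e l u v t"
  by (induction k) auto

lemma teval_tpow:
  "teval e l u v (tpow x xi k) = (if 0 \<le> k then teval e l u v x ^ nat k else teval e l u v xi ^ nat (- k))"
  by (simp add: teval_funpow_Mul)

lemma teval_foldr_Add: "teval e l u v (foldr Add (map f xs) (Cst 0)) = (\<Sum>k\<leftarrow>xs. teval e l u v (f k))"
  by (induction xs) auto

lemma teval_mmul:
  "teval e l u v (mmul n P R i j) = (\<Sum>k\<in>{1..n}. teval e l u v (P i k) * teval e l u v (R k j))"
proof -
  have "teval e l u v (mmul n P R i j) = (\<Sum>k\<leftarrow>[1..<n + 1]. teval e l u v (P i k) * teval e l u v (R k j))"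
    unfolding mmul_def teval_foldr_Add by simp
  also have "\<dots> = (\<Sum>k\<in>set [1..<n + 1]. teval e l u v (P i k) * teval e l u v (R k j))"
    by (rule sum_list_distinct_conv_sum_set) simp
  also have "set [1..<n + 1] = {1..n}" by auto
  finally show ?thesis .
qed

definition offdiag_gen :: "gen \<Rightarrow> bool" where
  "offdiag_gen g = (case g of Ga i j \<Rightarrow> i \<noteq> j | _ \<Rightarrow> True)"

lemma phi_braid_Nil [simp]: "phi_braid [] t = t"
  unfolding phi_braid_def by simp

lemma phi_braid_Cons: "phi_braid ((k, s) # B) t = subst_a (phi_gen k s) (phi_braid B t)"
  unfolding phi_braid_def by simp

lemma offdiag_subst_phi_gen: "all_gens offdiag_gen t \<Longrightarrow> all_gens offdiag_gen (subst_a (phi_gen k s) t)"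
  by (rule all_gens_subst_a, assumption)
     (auto simp: phi_gen_def a_def Sub_def Neg_def offdiag_gen_def split: gen.splits)

lemma phi_braid_offdiag: "all_gens offdiag_gen t \<Longrightarrow> all_gens offdiag_gen (phi_braid B t)"
  by (induction B) (auto simp: phi_braid_Cons offdiag_subst_phi_gen)

text \<open>Terms linear in the generators of an extra strand st, as phi_B(a_{i*}) and phi_B(a_{*i}) are.\<close>

definition avoids_strand :: "nat \<Rightarrow> gen \<Rightarrow> bool" where
  "avoids_strand st g = (case g of Ga i j \<Rightarrow> i \<noteq> st \<and> j \<noteq> st | _ \<Rightarrow> True)"

abbreviation strand_free :: "nat \<Rightarrow> dterm \<Rightarrow> bool" where
  "strand_free st t \<equiv> all_gens (avoids_strand st) t"

fun linear_left :: "nat \<Rightarrow> nat \<Rightarrow> dterm \<Rightarrow> bool" where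
  "linear_left n st (Gen g) = (case g of Ga i j \<Rightarrow> j = st \<and> i \<in> {1..n} | _ \<Rightarrow> False)"
| "linear_left n st (Add s t) = (linear_left n st s \<and> linear_left n st t)"
| "linear_left n st (Mul s t) =
     ((linear_left n st s \<and> strand_free st t) \<or> (strand_free st s \<and> linear_left n st t))"
| "linear_left n st _ = False"

fun linear_right :: "nat \<Rightarrow> nat \<Rightarrow> dterm \<Rightarrow> bool" where
  "linear_right n st (Gen g) = (case g of Ga i j \<Rightarrow> i = st \<and> j \<in> {1..n} | _ \<Rightarrow> False)"
| "linear_right n st (Add s t) = (linear_right n st s \<and> linear_right n st t)"
| "linear_right n st (Mul s t) =
     ((linear_right n st s \<and> strand_free st t) \<or> (strand_free st s \<and> linear_right n st t))"
| "linear_right n st _ = False"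

lemma teval_coeffL_strand_free: "strand_free st t \<Longrightarrow> teval e l u v (coeffL st j t) = 0"
proof (induction t)
  case (Gen g) thus ?case by (cases g) (auto simp: avoids_strand_def)
qed auto

lemma teval_coeffR_strand_free: "strand_free st t \<Longrightarrow> teval e l u v (coeffR st j t) = 0"
proof (induction t)
  case (Gen g) thus ?case by (cases g) (auto simp: avoids_strand_def)
qed auto

lemma teval_linear_left:
  "linear_left n st t \<Longrightarrow> teval e l u v t = (\<Sum>j\<in>{1..n}. teval e l u v (coeffL st j t) * e (Ga j st))"
proof (induction t)
  case (Gen g)
  then obtain i where g: "g = Ga i st" "i \<in> {1..n}" by (cases g) auto
  have "(\<Sum>j\<in>{1..n}. (if i = j then 1 else 0) * e (Ga j st)) = e (Ga i st)"
    using g(2) by (simp add: sum_mult_delta_left)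
  thus ?case using g by (simp add: if_distrib[of "teval e l u v"] cong: if_cong)
next
  case (Add s t) thus ?case by (simp add: sum.distrib algebra_simps)
next
  case (Mul s t)
  thus ?case using teval_coeffL_strand_free[of st t] teval_coeffL_strand_free[of st s]
    by (auto simp: sum_distrib_left sum_distrib_right algebra_simps)
qed auto

lemma teval_linear_right:
  "linear_right n st t \<Longrightarrow> teval e l u v t = (\<Sum>j\<in>{1..n}. e (Ga st j) * teval e l u v (coeffR st j t))"
proof (induction t)
  case (Gen g)
  then obtain i where g: "g = Ga st i" "i \<in> {1..n}" by (cases g) auto
  have "(\<Sum>j\<in>{1..n}. e (Ga st j) * (if j = i then 1 else 0)) = e (Ga st i)"
    using g(2) by (simp add: sum_mult_delta_right)
  thus ?case using g by (simp add: if_distrib[of "teval e l u v"] eq_commute[of i] cong: if_cong)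
next
  case (Add s t) thus ?case by (simp add: sum.distrib algebra_simps)
next
  case (Mul s t)
  thus ?case using teval_coeffR_strand_free[of st t] teval_coeffR_strand_free[of st s]
    by (auto simp: sum_distrib_left sum_distrib_right algebra_simps)
qed auto

lemma teval_coeffL_cong:
  "linear_left n st t \<Longrightarrow> (\<And>g. avoids_strand st g \<Longrightarrow> e g = e' g) \<Longrightarrow>
   teval e l u v (coeffL st j t) = teval e' l u v (coeffL st j t)"
proof (induction t)
  case (Gen g) thus ?case by (cases g) auto
next
  case (Mul s t)
  thus ?case using teval_coeffL_strand_free[of st t] teval_coeffL_strand_free[of st s]
      teval_cong[of "avoids_strand st" t e e'] teval_cong[of "avoids_strand st" s e e'] by auto
qed auto

lemma teval_coeffR_cong:
  "linear_right n st t \<Longrightarrow> (\<And>g. avoids_strand st g \<Longrightarrow> e g = e' g) \<Longrightarrow>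
   teval e l u v (coeffR st j t) = teval e' l u v (coeffR st j t)"
proof (induction t)
  case (Gen g) thus ?case by (cases g) auto
next
  case (Mul s t)
  thus ?case using teval_coeffR_strand_free[of st t] teval_coeffR_strand_free[of st s]
      teval_cong[of "avoids_strand st" t e e'] teval_cong[of "avoids_strand st" s e e'] by auto
qed auto

lemma strand_free_subst_phi_gen:
  "1 \<le> k \<Longrightarrow> k < n \<Longrightarrow> n < st \<Longrightarrow> strand_free st t \<Longrightarrow> strand_free st (subst_a (phi_gen k s) t)"
  by (rule all_gens_subst_a, assumption)
     (auto simp: avoids_strand_def phi_gen_def a_def Sub_def Neg_def split: gen.splits)

lemma linear_left_subst_phi_gen:
  assumes "1 \<le> k" "k < n" "n < st"
  shows "linear_left n st t \<Longrightarrow> linear_left n st (subst_a (phi_gen k s) t)"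
proof (induction t)
  case (Gen g)
  then obtain i where "g = Ga i st" "i \<in> {1..n}" by (cases g) auto
  thus ?case using assms unfolding phi_gen_def a_def Sub_def Neg_def by (auto simp: avoids_strand_def)
next
  case (Mul s t) thus ?case using strand_free_subst_phi_gen[OF assms] by auto
qed auto

lemma linear_right_subst_phi_gen:
  assumes "1 \<le> k" "k < n" "n < st"
  shows "linear_right n st t \<Longrightarrow> linear_right n st (subst_a (phi_gen k s) t)"
proof (induction t)
  case (Gen g)
  then obtain i where "g = Ga st i" "i \<in> {1..n}" by (cases g) auto
  thus ?case using assms unfolding phi_gen_def a_def Sub_def Neg_def by (auto simp: avoids_strand_def)
next
  case (Mul s t) thus ?case using strand_free_subst_phi_gen[OF assms] by auto
qed auto

lemma linear_phi_braid:
  assumes "valid_braid n B"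
  shows linear_left_phi_braid: "linear_left n (n + 1) t \<Longrightarrow> linear_left n (n + 1) (phi_braid B t)"
    and linear_right_phi_braid: "linear_right n (n + 1) t \<Longrightarrow> linear_right n (n + 1) (phi_braid B t)"
  using assms
  by (induction B arbitrary: t)
     (auto simp: phi_braid_Cons valid_braid_def linear_left_subst_phi_gen linear_right_subst_phi_gen)

section \<open>Frames, cords and the braid action\<close>

locale cord_setting = gl_setting +
  fixes mu :: complex
  assumes mu_nonzero: "mu \<noteq> 0"
begin

definition meridian :: "(nat \<Rightarrow> complex mat) \<Rightarrow> nat \<Rightarrow> complex mat" where
  "meridian M i = M i * diag_first mu * minv (M i)"

definition meridian_inv :: "(nat \<Rightarrow> complex mat) \<Rightarrow> nat \<Rightarrow> complex mat" where
  "meridian_inv M i = M i * diag_first (inverse mu) * minv (M i)"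

definition cord :: "(nat \<Rightarrow> complex mat) \<Rightarrow> nat \<Rightarrow> nat \<Rightarrow> complex" where
  "cord M i j = (minv (M i) * M j) $$ (0, 0)"

lemma meridian_GL:
  assumes "M i \<in> GL"
  shows meridian_in_GL: "meridian M i \<in> GL" and minv_meridian: "minv (meridian M i) = meridian_inv M i"
    and meridian_inv_in_GL: "meridian_inv M i \<in> GL" and minv_meridian_inv: "minv (meridian_inv M i) = meridian M i"
  unfolding meridian_def meridian_inv_def
  using conj_diag_first_GL[OF assms, of mu] conj_diag_first_GL[OF assms, of "inverse mu"] mu_nonzero by auto

lemma cord_self [simp]: "M i \<in> GL \<Longrightarrow> cord M i i = 1"
  unfolding cord_def using dim_pos by simp

lemma cord_through_meridian:
  assumes "\<forall>i. M i \<in> GL"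
  shows "(minv (M i) * meridian M k * M j) $$ (0, 0) = cord M i j + (mu - 1) * cord M i k * cord M k j"
    and "(minv (M i) * meridian_inv M k * M j) $$ (0, 0) =
           cord M i j + (inverse mu - 1) * cord M i k * cord M k j"
  unfolding meridian_def meridian_inv_def cord_def using entry00_conj_diag_first assms by auto

text \<open>The generator sigma_k^(+-1) acts on frames as the Artin action acts on meridians.\<close>
definition braid_gen_act :: "nat \<Rightarrow> bool \<Rightarrow> (nat \<Rightarrow> complex mat) \<Rightarrow> nat \<Rightarrow> complex mat" where
  "braid_gen_act k s M = (if s then M(k := meridian M k * M (k + 1), k + 1 := M k)
                          else M(k := M (k + 1), k + 1 := meridian_inv M (k + 1) * M k))"

lemma braid_gen_act_GL: "\<forall>i. M i \<in> GL \<Longrightarrow> \<forall>i. braid_gen_act k s M i \<in> GL"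
  unfolding braid_gen_act_def using meridian_GL mult_in_GL by auto

lemma cord_braid_gen_act_pos:
  assumes "\<forall>i. M i \<in> GL"
  shows "cord (braid_gen_act k True M) i j =
    (if i = k then
       (if j = k then 1
        else if j = k + 1 then inverse mu * cord M (k + 1) k
        else cord M (k + 1) j + (inverse mu - 1) * cord M (k + 1) k * cord M k j)
     else if i = k + 1 then
       (if j = k then mu * cord M k (k + 1) else if j = k + 1 then 1 else cord M k j)
     else
       (if j = k then cord M i (k + 1) + (mu - 1) * cord M i k * cord M k (k + 1)
        else if j = k + 1 then cord M i k else cord M i j))"
proof (cases "i = j")
  case True
  thus ?thesis using braid_gen_act_GL[OF assms] assms by simp
next
  case False
  have GL: "\<And>i. M i \<in> GL" using assms by auto
  note through = cord_through_meridian[OF assms, unfolded cord_def]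
  have "(minv (M i) * (meridian M k * M (k + 1))) $$ (0, 0) =
      (minv (M i) * meridian M k * M (k + 1)) $$ (0, 0)" for i
    using GL meridian_GL GL_carrier by (simp add: mult_assoc_m)
  thus ?thesis using False GL dim_pos through
    by (auto simp: cord_def braid_gen_act_def meridian_GL minv_mult_distrib) (auto simp: algebra_simps)
qed

lemma cord_braid_gen_act_neg:
  assumes "\<forall>i. M i \<in> GL"
  shows "cord (braid_gen_act k False M) i j =
    (if i = k then
       (if j = k then 1
        else if j = k + 1 then inverse mu * cord M (k + 1) k
        else cord M (k + 1) j)
     else if i = k + 1 then
       (if j = k then mu * cord M k (k + 1) else if j = k + 1 then 1
        else cord M k j + (mu - 1) * cord M k (k + 1) * cord M (k + 1) j)
     else
       (if j = k then cord M i (k + 1)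
        else if j = k + 1 then cord M i k + (inverse mu - 1) * cord M i (k + 1) * cord M (k + 1) k
        else cord M i j))"
proof (cases "i = j")
  case True
  thus ?thesis using braid_gen_act_GL[OF assms] assms by simp
next
  case False
  have GL: "\<And>i. M i \<in> GL" using assms by auto
  note through = cord_through_meridian[OF assms, unfolded cord_def]
  have "(minv (M i) * (meridian_inv M (k + 1) * M k)) $$ (0, 0) =
      (minv (M i) * meridian_inv M (k + 1) * M k) $$ (0, 0)" for i
    using GL meridian_GL GL_carrier by (simp add: mult_assoc_m)
  thus ?thesis using False GL dim_pos through
    by (auto simp: cord_def braid_gen_act_def meridian_GL minv_mult_distrib) (auto simp: algebra_simps)
qed

text \<open>The coefficient for i > j makes the value on A_ij equal to (1 - mu) * cord M i j for all i \<noteq> j,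
  since there A_ij = -mu a_ij.\<close>
fun cord_eval :: "(nat \<Rightarrow> complex mat) \<Rightarrow> gen \<Rightarrow> complex" where
  "cord_eval M (Ga i j) = (if i < j then 1 - mu else 1 - inverse mu) * cord M i j"
| "cord_eval M _ = 0"

lemma teval_phi_gen_cord_eval:
  assumes "\<forall>i. M i \<in> GL" "i \<noteq> j"
  shows "teval (cord_eval M) l mu u (phi_gen k s i j) = cord_eval (braid_gen_act k s M) (Ga i j)"
  using assms mu_nonzero
  by (cases s) (auto simp: phi_gen_def a_def Sub_def Neg_def field_simps
      cord_braid_gen_act_pos cord_braid_gen_act_neg)

fun braid_act :: "braid \<Rightarrow> (nat \<Rightarrow> complex mat) \<Rightarrow> nat \<Rightarrow> complex mat" where
  "braid_act [] M = M"
| "braid_act ((k, s) # B) M = braid_act B (braid_gen_act k s M)"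

lemma braid_act_GL: "\<forall>i. M i \<in> GL \<Longrightarrow> \<forall>i. braid_act B M i \<in> GL"
  by (induction B arbitrary: M) (auto simp: braid_gen_act_GL)

lemma teval_phi_braid_cord_eval:
  assumes "\<forall>i. M i \<in> GL" "all_gens offdiag_gen t"
  shows "teval (cord_eval M) l mu u (phi_braid B t) = teval (cord_eval (braid_act B M)) l mu u t"
  using assms(1)
proof (induction B arbitrary: M)
  case (Cons x B)
  obtain k s where x: "x = (k, s)" by (cases x)
  have "teval (cord_eval M) l mu u (phi_braid ((k, s) # B) t)
      = teval (cord_eval (braid_gen_act k s M)) l mu u (phi_braid B t)"
    unfolding phi_braid_Cons teval_subst_a
  proof (rule teval_cong[OF phi_braid_offdiag[OF assms(2)]])
    fix g assume "offdiag_gen g"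
    thus "(case g of Ga i j \<Rightarrow> teval (cord_eval M) l mu u (phi_gen k s i j) | _ \<Rightarrow> cord_eval M g)
        = cord_eval (braid_gen_act k s M) g"
      using teval_phi_gen_cord_eval[OF Cons.prems] by (cases g) (auto simp: offdiag_gen_def)
  qed
  also have "\<dots> = teval (cord_eval (braid_act B (braid_gen_act k s M))) l mu u t"
    using Cons.IH braid_gen_act_GL[OF Cons.prems] by blast
  finally show ?case unfolding x by simp
qed simp

lemma meridian_fun_upd:
  "meridian (M(q := A)) i = (if i = q then A * diag_first mu * minv A else meridian M i)"
  unfolding meridian_def by simp

lemma meridian_braid_gen_act:
  assumes "\<forall>i. M i \<in> GL"
  shows "meridian (braid_gen_act k s M) i = eval_fword m (meridian M) (artin_gen k s i)"
proof -
  have GL: "\<And>i. M i \<in> GL" "\<And>i. meridian M i \<in> GL" "\<And>i. meridian_inv M i \<in> GL"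
    using assms meridian_GL by auto
  have "(meridian M k * M (k + 1)) * diag_first mu * minv (meridian M k * M (k + 1))
      = meridian M k * meridian M (k + 1) * meridian_inv M k"
    using conj_mult_diag_first[OF GL(2) GL(1), where d = mu] GL(1)
    by (simp only: meridian_def[of M "k + 1", symmetric] minv_meridian)
  also have "\<dots> = meridian M k * (meridian M (k + 1) * meridian_inv M k)"
    using GL GL_carrier by (simp add: mult_assoc_m)
  moreover have "(meridian_inv M (k + 1) * M k) * diag_first mu * minv (meridian_inv M (k + 1) * M k)
      = meridian_inv M (k + 1) * meridian M k * meridian M (k + 1)"
    using conj_mult_diag_first[OF GL(3) GL(1), where d = mu] GL(1)
    by (simp only: meridian_def[of M k, symmetric] minv_meridian_inv)
  moreover have "\<dots> = meridian_inv M (k + 1) * (meridian M k * meridian M (k + 1))"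
    using GL GL_carrier by (simp add: mult_assoc_m)
  moreover have "M j * diag_first mu * minv (M j) = meridian M j" for j
    unfolding meridian_def ..
  ultimately show ?thesis
    using GL by (cases s) (auto simp: braid_gen_act_def meridian_fun_upd artin_gen_def eval_fword_Cons
        eval_letter_def minv_meridian right_mult_one_mat[OF GL_carrier])
qed

lemma eval_fword_artin_word:
  assumes "\<forall>i. X i \<in> GL" "\<forall>i. Y i \<in> GL" "\<And>i. Y i = eval_fword m X (artin_gen k s i)"
  shows "eval_fword m Y w = eval_fword m X (artin_word k s w)"
proof (induction w)
  case (Cons x w)
  obtain i e where x: "x = (i, e)" by (cases x)
  have "eval_letter Y x = eval_fword m X (if e then artin_gen k s i else finv (artin_gen k s i))"
    unfolding x eval_letter_def using assms by (simp add: eval_fword_finv)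
  thus ?case using Cons assms(1,2) unfolding x by (simp add: artin_word_Cons eval_fword_Cons eval_fword_append)
qed simp

lemma braid_gen_act_eq_arc_corr:
  assumes "\<forall>i. M i \<in> GL"
  shows "braid_gen_act k s M p = eval_fword m (meridian M) (arc_corr k s p) * M (swap_strand k p)"
  using assms meridian_GL GL_carrier
  by (auto simp: braid_gen_act_def arc_corr_def swap_strand_def eval_fword_single eval_letter_def
      minv_meridian left_mult_one_mat[OF GL_carrier])

lemma braid_act_eq_arcs:
  assumes "\<forall>i. M i \<in> GL"
  shows "braid_act B M j = eval_fword m (meridian M) (fst (arcs B j)) * M (braid_perm B j)"
  using assms
proof (induction B arbitrary: M)
  case Nil
  thus ?case by (simp add: left_mult_one_mat[OF GL_carrier])
next
  case (Cons x B)
  obtain k s where x: "x = (k, s)" by (cases x)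
  let ?M' = "braid_gen_act k s M"
  have GL: "\<forall>i. ?M' i \<in> GL" "\<forall>i. meridian M i \<in> GL" "\<forall>i. meridian ?M' i \<in> GL"
    using braid_gen_act_GL meridian_GL Cons.prems by auto
  have "braid_act (x # B) M j = eval_fword m (meridian ?M') (fst (arcs B j)) * ?M' (braid_perm B j)"
    using Cons.IH[OF GL(1)] unfolding x by simp
  also have "\<dots> = eval_fword m (meridian M) (artin_word k s (fst (arcs B j))) *
      (eval_fword m (meridian M) (arc_corr k s (snd (arcs B j))) * M (swap_strand k (braid_perm B j)))"
    using eval_fword_artin_word[OF GL(2,3) meridian_braid_gen_act[OF Cons.prems]]
      braid_gen_act_eq_arc_corr[OF Cons.prems] snd_arcs by simp
  also have "\<dots> = eval_fword m (meridian M) (fst (arcs (x # B) j)) * M (braid_perm (x # B) j)"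
    unfolding x arcs_Cons braid_perm_Cons using eval_fword_append[OF GL(2)] eval_fword_in_GL[OF GL(2)]
      Cons.prems GL_carrier by (simp add: mult_assoc_m)
  finally show ?case .
qed

lemma braid_act_fun_upd_outside:
  assumes "valid_braid n B" "q > n"
  shows "braid_act B (M(q := A)) = (braid_act B M)(q := A)"
proof -
  have "\<forall>(k, s)\<in>set B. k < n" using assms(1) unfolding valid_braid_def by auto
  hence "braid_act B (M(q := A)) = (braid_act B M)(q := A) \<and> braid_act B M q = M q"
  proof (induction B arbitrary: M)
    case (Cons x B)
    obtain k s where x: "x = (k, s)" by (cases x)
    have "k < n" using Cons.prems x by auto
    hence "braid_gen_act k s (M(q := A)) = (braid_gen_act k s M)(q := A)"
      "braid_gen_act k s M q = M q"
      using assms(2) by (auto simp: braid_gen_act_def meridian_def meridian_inv_def fun_upd_twist)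
    moreover have "\<forall>(k, s)\<in>set B. k < n" using Cons.prems by simp
    ultimately show ?case using Cons.IH[of "braid_gen_act k s M"] unfolding x braid_act.simps by metis
  qed simp
  thus ?thesis by simp
qed

end

context gl_setting
begin

definition first_block :: "complex \<Rightarrow> complex mat \<Rightarrow> bool" where
  "first_block c A \<longleftrightarrow> A \<in> carrier_mat m m \<and> A $$ (0, 0) = c \<and>
     (\<forall>l<m. l \<noteq> 0 \<longrightarrow> A $$ (0, l) = 0 \<and> A $$ (l, 0) = 0)"

lemma first_block_mult_index:
  assumes "first_block c A" "C \<in> carrier_mat m m" "l < m"
  shows first_block_mult_left: "(A * C) $$ (0, l) = c * C $$ (0, l)"
    and first_block_mult_right: "(C * A) $$ (l, 0) = C $$ (l, 0) * c"
proof -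
  have "(A * C) $$ (0, l) = (\<Sum>k<m. (if 0 = k then c else 0) * C $$ (k, l))"
    using assms dim_pos unfolding first_block_def
    by (simp del: index_mult_mat add: mult_mat_index_sum) (intro sum.cong, auto)
  thus "(A * C) $$ (0, l) = c * C $$ (0, l)" using dim_pos by (simp add: if_distrib[of "\<lambda>x. x * _"] cong: if_cong)
  have "(C * A) $$ (l, 0) = (\<Sum>k<m. C $$ (l, k) * (if k = 0 then c else 0))"
    using assms dim_pos unfolding first_block_def
    by (simp del: index_mult_mat add: mult_mat_index_sum) (intro sum.cong, auto)
  thus "(C * A) $$ (l, 0) = C $$ (l, 0) * c" using dim_pos by (simp add: sum_mult_delta_right)
qed

lemma first_block_mult: "first_block c A \<Longrightarrow> first_block d C \<Longrightarrow> first_block (c * d) (A * C)"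
  using first_block_mult_index[of c A C] first_block_mult_index[of d C A] dim_pos
  unfolding first_block_def by auto

lemma first_block_diag_first: "first_block d (diag_first d)"
  unfolding first_block_def using dim_pos by (auto simp: diag_first_index)

lemma first_block_minv:
  assumes "first_block c A" "A \<in> GL"
  shows "c \<noteq> 0" "first_block (inverse c) (minv A)"
proof -
  have right: "minv A $$ (l, 0) * c = (if l = 0 then 1 else 0)" if "l < m" for l
    using first_block_mult_right[OF assms(1) minv_carrier[OF assms(2)] that] assms(2) that dim_pos by simp
  have left: "c * minv A $$ (0, l) = (if l = 0 then 1 else 0)" if "l < m" for l
    using first_block_mult_left[OF assms(1) minv_carrier[OF assms(2)] that] assms(2) that dim_pos by simp
  show c: "c \<noteq> 0" using right[of 0] dim_pos by auto
  have "minv A $$ (0, l) = 0 \<and> minv A $$ (l, 0) = 0" if "l < m" "l \<noteq> 0" for l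
    using left[OF that(1)] right[OF that(1)] that(2) c by simp
  moreover have "minv A $$ (0, 0) = inverse c" using right[of 0] dim_pos c by (simp add: field_simps)
  ultimately show "first_block (inverse c) (minv A)" unfolding first_block_def using assms(2) by auto
qed

end

section \<open>The frame of a representation along the knot\<close>

locale knot_rep = cord_setting +
  fixes n :: nat and B :: braid and X :: "nat \<Rightarrow> complex mat" and lam0 :: complex
  assumes valid: "valid_braid n B" and knot: "closure_is_knot n B"
    and rep: "knot_group_rep n B m X"
    and meridian_image: "X 1 = diag_first mu"
    and longitude_00: "eval_fword m X (longitude_word n B) $$ (0, 0) = lam0"
    and longitude_offdiag:
      "\<forall>i < m. \<forall>j < m. i \<noteq> j \<longrightarrow> eval_fword m X (longitude_word n B) $$ (i, j) = 0"
begin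

lemma n_pos: "1 \<le> n"
  using knot unfolding closure_is_knot_def by auto

definition rho :: "nat \<Rightarrow> complex mat" where
  "rho i = (if i \<in> {1..n} then X i else 1\<^sub>m m)"

lemma rho_GL: "\<forall>i. rho i \<in> GL"
  using rep invertible_mat_in_GL one_in_GL unfolding rho_def knot_group_rep_def by auto

lemma eval_fword_rho: "fst ` set w \<subseteq> {1..n} \<Longrightarrow> eval_fword m X w = eval_fword m rho w"
  by (rule eval_fword_cong) (auto simp: rho_def)

definition arc_mat :: "nat \<Rightarrow> complex mat" where
  "arc_mat j = eval_fword m rho (fst (arcs B j))"

lemma arc_mat_GL: "arc_mat j \<in> GL"
  unfolding arc_mat_def using eval_fword_in_GL rho_GL by auto

lemma rho_conj_arc_mat:
  assumes "j \<in> {1..n}"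
  shows "rho j = arc_mat j * rho (braid_perm B j) * minv (arc_mat j)"
proof -
  have arc: "fst ` set (fst (arcs B j)) \<subseteq> {1..n}" "braid_perm B j \<in> {1..n}"
    using fst_set_arcs[OF valid assms] braid_perm_range[OF valid assms] by auto
  have "rho j = eval_fword m X (artin_braid B [(j, True)])"
    using rep assms unfolding knot_group_rep_def rho_def by auto
  also have "\<dots> = eval_fword m rho (artin_braid B [(j, True)])"
    using arc by (intro eval_fword_rho) (simp add: artin_braid_generator image_Un)
  also have "\<dots> = arc_mat j * (rho (braid_perm B j) * minv (arc_mat j))"
    unfolding artin_braid_generator arc_mat_def using rho_GL
    by (simp add: eval_fword_append eval_fword_finv eval_fword_Cons eval_letter_def)
  also have "\<dots> = arc_mat j * rho (braid_perm B j) * minv (arc_mat j)"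
    using arc_mat_GL rho_GL GL_carrier by (simp add: mult_assoc_m)
  finally show ?thesis .
qed

definition visit :: "nat \<Rightarrow> nat" where "visit t = (braid_perm B ^^ t) 1"

lemma visit_0 [simp]: "visit 0 = 1"
  unfolding visit_def by simp

lemma visit_Suc: "visit (Suc t) = braid_perm B (visit t)"
  unfolding visit_def by simp

lemma visit_range: "visit t \<in> {1..n}"
  by (induction t) (use n_pos braid_perm_range[OF valid] in \<open>auto simp: visit_Suc\<close>)

lemma visit_image: "visit ` {0..<n} = {1..n}"
proof
  show "{1..n} \<subseteq> visit ` {0..<n}"
  proof
    fix j assume "j \<in> {1..n}"
    then obtain t where "t < n" "(braid_perm B ^^ t) 1 = j" using knot unfolding closure_is_knot_def by blast
    thus "j \<in> visit ` {0..<n}" unfolding visit_def by auto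
  qed
qed (use visit_range in auto)

lemma visit_surj: "j \<in> {1..n} \<Longrightarrow> \<exists>t<n. visit t = j"
  using visit_image by (metis atLeastLessThan_iff imageE)

lemma inj_on_visit: "inj_on visit {0..<n}"
  by (rule eq_card_imp_inj_on) (auto simp: visit_image)

lemma visit_n: "visit n = 1"
proof -
  obtain s where s: "s < n" "visit n = visit s" using visit_image visit_range[of n] by force
  show ?thesis
  proof (cases s)
    case 0 thus ?thesis using s by simp
  next
    case (Suc s')
    have "braid_perm B (visit (n - 1)) = braid_perm B (visit s')"
      using s Suc n_pos visit_Suc[of "n - 1"] visit_Suc[of s'] by simp
    hence "visit (n - 1) = visit s'" using inj_braid_perm by (auto dest: injD)
    hence "n - 1 = s'" using inj_onD[OF inj_on_visit] s Suc by simp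
    thus ?thesis using s Suc by simp
  qed
qed

definition path_mat :: "nat \<Rightarrow> complex mat" where
  "path_mat t = eval_fword m rho (concat (map (\<lambda>i. fst (arcs B (visit i))) [t..<n]))"

lemma path_mat_GL: "path_mat t \<in> GL"
  unfolding path_mat_def using eval_fword_in_GL rho_GL by auto

lemma path_mat_n: "path_mat n = 1\<^sub>m m"
  unfolding path_mat_def by simp

lemma path_mat_step: "t < n \<Longrightarrow> path_mat t = arc_mat (visit t) * path_mat (Suc t)"
  unfolding path_mat_def arc_mat_def using rho_GL by (simp add: upt_conv_Cons eval_fword_append)

lemma rho_conj_path_mat: "t \<le> n \<Longrightarrow> rho (visit t) = path_mat t * rho 1 * minv (path_mat t)"
proof (induction "n - t" arbitrary: t)
  case 0
  hence "t = n" by simp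
  thus ?case using visit_n path_mat_n rho_GL
    by (simp add: left_mult_one_mat[OF GL_carrier] right_mult_one_mat[OF GL_carrier])
next
  case (Suc d)
  hence t: "t < n" by simp
  have "rho (visit t) = arc_mat (visit t) * rho (visit (Suc t)) * minv (arc_mat (visit t))"
    using rho_conj_arc_mat[OF visit_range] visit_Suc by simp
  also have "\<dots> = arc_mat (visit t) * (path_mat (Suc t) * rho 1 * minv (path_mat (Suc t))) *
      minv (arc_mat (visit t))"
    using Suc t by simp
  also have "\<dots> = path_mat t * rho 1 * minv (path_mat t)"
    using path_mat_step[OF t] arc_mat_GL path_mat_GL rho_GL GL_carrier
    by (simp add: minv_mult_distrib mult_assoc_m)
  finally show ?case .
qed

text \<open>Strand visit t gets the product of the arc matrices of the remaining passes and strand 1 the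
  identity: then the frame realises rho, and the braid changes only the frame of strand 1.\<close>
definition frame :: "nat \<Rightarrow> complex mat" where
  "frame j = (if j \<in> {2..n} then path_mat (the_inv_into {0..<n} visit j) else 1\<^sub>m m)"

lemma frame_GL: "\<forall>j. frame j \<in> GL"
  unfolding frame_def using path_mat_GL one_in_GL by auto

lemma frame_visit: "1 \<le> t \<Longrightarrow> t \<le> n \<Longrightarrow> frame (visit t) = path_mat t"
proof (cases "t = n")
  case True thus ?thesis using visit_n path_mat_n unfolding frame_def by simp
next
  case False
  assume t: "1 \<le> t" "t \<le> n"
  hence "visit t \<noteq> visit 0" using inj_onD[OF inj_on_visit, of t 0] False by auto
  hence "visit t \<in> {2..n}" using visit_range[of t] by auto
  thus ?thesis unfolding frame_def using the_inv_into_f_f[OF inj_on_visit] t False by simp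
qed

lemma meridian_frame: "j \<in> {1..n} \<Longrightarrow> meridian frame j = rho j"
proof -
  assume j: "j \<in> {1..n}"
  show ?thesis
  proof (cases "j = 1")
    case True
    thus ?thesis unfolding meridian_def frame_def rho_def using meridian_image n_pos
      by (simp add: left_mult_one_mat right_mult_one_mat)
  next
    case False
    obtain t where t: "t < n" "visit t = j" using visit_surj[OF j] by blast
    hence "1 \<le> t" using False by (cases t) auto
    hence "frame j = path_mat t" using frame_visit t by auto
    moreover have "rho 1 = diag_first mu" using meridian_image n_pos unfolding rho_def by simp
    ultimately show ?thesis unfolding meridian_def using rho_conj_path_mat[of t] t by simp
  qed
qed

lemma braid_act_frame: "j \<in> {1..n} \<Longrightarrow> braid_act B frame j = arc_mat j * frame (braid_perm B j)"
proof -
  assume j: "j \<in> {1..n}"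
  have "eval_fword m (meridian frame) (fst (arcs B j)) = arc_mat j"
    unfolding arc_mat_def using fst_set_arcs[OF valid j] meridian_frame by (intro eval_fword_cong) auto
  thus ?thesis using braid_act_eq_arcs[OF frame_GL] by simp
qed

lemma braid_act_frame_visit: "t < n \<Longrightarrow> braid_act B frame (visit t) = path_mat t"
proof -
  assume t: "t < n"
  have "braid_act B frame (visit t) = arc_mat (visit t) * frame (visit (Suc t))"
    using braid_act_frame[OF visit_range] visit_Suc by simp
  also have "\<dots> = path_mat t" using frame_visit[of "Suc t"] path_mat_step t by simp
  finally show ?thesis .
qed

lemma braid_act_frame_fixed: "j \<in> {2..n} \<Longrightarrow> braid_act B frame j = frame j"
proof -
  assume j: "j \<in> {2..n}"
  then obtain t where t: "t < n" "visit t = j" using visit_surj[of j] by auto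
  hence "t \<noteq> 0" using j by (cases t) auto
  hence "frame j = path_mat t" using frame_visit[of t] t by simp
  thus ?thesis using braid_act_frame_visit[of t] t by simp
qed

lemma braid_act_frame_1: "braid_act B frame 1 = path_mat 0"
  using braid_act_frame_visit[of 0] n_pos by simp

end

context knot_rep
begin

lemma eval_fword_replicate_1:
  "eval_fword m rho (replicate k (1, b)) = diag_first ((if b then mu else inverse mu) ^ k)"
proof (induction k)
  case 0 thus ?case by (simp add: diag_first_one)
next
  case (Suc k)
  have "eval_letter rho (1, b) = diag_first (if b then mu else inverse mu)"
    unfolding eval_letter_def rho_def using meridian_image n_pos diag_first_GL mu_nonzero by auto
  thus ?case using Suc rho_GL by (simp add: eval_fword_Cons diag_first_mult)
qed

text \<open>mu^(-w), the image of the framing correction x_1^(-w) in the longitude word.\<close>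
definition mu_neg_writhe :: complex where
  "mu_neg_writhe = (if 0 \<le> writhe B then inverse mu ^ nat (writhe B) else mu ^ nat (- writhe B))"

definition kappa :: complex where "kappa = lam0 * inverse mu_neg_writhe"

lemma mu_neg_writhe_nonzero: "mu_neg_writhe \<noteq> 0"
  unfolding mu_neg_writhe_def using mu_nonzero by auto

definition longitude_mat :: "complex mat" where
  "longitude_mat = eval_fword m X (longitude_word n B)"

text \<open>The blackboard longitude runs once through every strand, i.e. along the whole path.\<close>
lemma longitude_mat_eq: "longitude_mat = path_mat 0 * diag_first mu_neg_writhe"
proof -
  have bb: "fst ` set (blackboard_longitude n B) \<subseteq> {1..n}"
    unfolding blackboard_longitude_def using fst_set_arcs[OF valid visit_range]
    unfolding visit_def by auto
  have "longitude_mat = eval_fword m rho (longitude_word n B)"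
    unfolding longitude_mat_def using bb n_pos by (intro eval_fword_rho) (auto simp: longitude_word_def)
  also have "\<dots> = eval_fword m rho (blackboard_longitude n B) *
      eval_fword m rho (if 0 \<le> writhe B then replicate (nat (writhe B)) (1, False)
                        else replicate (nat (- writhe B)) (1, True))"
    unfolding longitude_word_def using eval_fword_append[OF rho_GL] by blast
  also have "eval_fword m rho (blackboard_longitude n B) = path_mat 0"
    unfolding path_mat_def blackboard_longitude_def visit_def by simp
  also have "eval_fword m rho (if 0 \<le> writhe B then replicate (nat (writhe B)) (1, False)
                        else replicate (nat (- writhe B)) (1, True)) = diag_first mu_neg_writhe"
    unfolding mu_neg_writhe_def
    using eval_fword_replicate_1[of _ False] eval_fword_replicate_1[of _ True] by simp
  finally show ?thesis .
qed

lemma first_block_path_mat_0: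
  shows "first_block kappa (path_mat 0)" and kappa_nonzero: "kappa \<noteq> 0"
    and "first_block (inverse kappa) (minv (path_mat 0))" and lam0_nonzero: "lam0 \<noteq> 0"
proof -
  have "first_block lam0 longitude_mat"
    unfolding first_block_def
    using longitude_00 longitude_offdiag longitude_mat_eq path_mat_GL GL_carrier dim_pos
    unfolding longitude_mat_def by auto
  moreover have "path_mat 0 = longitude_mat * diag_first (inverse mu_neg_writhe)"
    using longitude_mat_eq path_mat_GL GL_carrier mu_neg_writhe_nonzero
    by (simp add: mult_assoc_m diag_first_mult diag_first_one right_mult_one_mat[OF GL_carrier])
  ultimately show block: "first_block kappa (path_mat 0)"
    unfolding kappa_def using first_block_mult first_block_diag_first by metis
  show "kappa \<noteq> 0" "first_block (inverse kappa) (minv (path_mat 0))"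
    using first_block_minv[OF block path_mat_GL] by auto
  thus "lam0 \<noteq> 0" unfolding kappa_def by auto
qed

text \<open>The diagonal entries of Lambda under the augmentation.\<close>
definition lam_diag :: "nat \<Rightarrow> complex" where "lam_diag i = (if i = 1 then kappa else 1)"

lemma lam_diag_nonzero: "lam_diag i \<noteq> 0"
  unfolding lam_diag_def using kappa_nonzero by auto

lemma braid_act_frame_entry00:
  assumes "i \<in> {1..n}" "C \<in> carrier_mat m m"
  shows "(minv (braid_act B frame i) * C) $$ (0, 0) = inverse (lam_diag i) * (minv (frame i) * C) $$ (0, 0)"
    and "(C * braid_act B frame i) $$ (0, 0) = (C * frame i) $$ (0, 0) * lam_diag i"
proof -
  have "i = 1 \<or> i \<in> {2..n}" using assms(1) by auto
  thus "(minv (braid_act B frame i) * C) $$ (0, 0) = inverse (lam_diag i) * (minv (frame i) * C) $$ (0, 0)"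
    "(C * braid_act B frame i) $$ (0, 0) = (C * frame i) $$ (0, 0) * lam_diag i"
    using braid_act_frame_1 braid_act_frame_fixed dim_pos assms(2)
      first_block_mult_left[OF first_block_path_mat_0(3) assms(2)]
      first_block_mult_right[OF first_block_path_mat_0(1) assms(2)]
    unfolding lam_diag_def frame_def
    by (auto simp: left_mult_one_mat right_mult_one_mat)
qed

lemma cord_braid_act_frame:
  assumes "i \<in> {1..n}" "j \<in> {1..n}"
  shows "cord (braid_act B frame) i j = inverse (lam_diag i) * lam_diag j * cord frame i j"
  using braid_act_frame_entry00(1)[OF assms(1), of "braid_act B frame j"]
    braid_act_frame_entry00(2)[OF assms(2), of "minv (frame i)"]
    braid_act_GL[OF frame_GL] frame_GL GL_carrier
  unfolding cord_def by simp

end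

section \<open>The augmentation\<close>

lemma Amat_offdiag: "i \<noteq> j \<Longrightarrow> all_gens offdiag_gen (Amat i j)"
  unfolding Amat_def a_def Neg_def Sub_def offdiag_gen_def by auto

context cord_setting
begin

lemma teval_Amat_cord_eval:
  "\<forall>i. M i \<in> GL \<Longrightarrow> teval (cord_eval M) l mu u (Amat i j) = (1 - mu) * cord M i j"
  unfolding Amat_def a_def Neg_def Sub_def using mu_nonzero by (auto simp: field_simps)

lemma teval_Ahat_cord_eval:
  "\<forall>i. M i \<in> GL \<Longrightarrow> teval (cord_eval M) l mu 1 (Ahat i j) = (1 - mu) * cord M i j"
  unfolding Ahat_def a_def Neg_def Sub_def using mu_nonzero by (auto simp: field_simps)

lemma cord_eval_fun_upd_avoiding:
  "avoids_strand q g \<Longrightarrow> cord_eval (M(q := A)) g = cord_eval M g"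
  by (cases g) (auto simp: avoids_strand_def cord_def)

end

context knot_rep
begin

abbreviation aug :: "dterm \<Rightarrow> complex" where "aug t \<equiv> teval (cord_eval frame) lam0 mu 1 t"

lemma teval_Lmat: "teval e lam0 mu 1 (Lmat n B i j) = (if i = j then lam_diag i else 0)"
  unfolding Lmat_def lam_diag_def kappa_def mu_neg_writhe_def using mu_nonzero
  by (auto simp: teval_tpow power_inverse teval_funpow_Mul)

lemma teval_Linv: "teval e lam0 mu 1 (Linv n B i j) = (if i = j then inverse (lam_diag i) else 0)"
  unfolding Linv_def lam_diag_def kappa_def mu_neg_writhe_def using mu_nonzero
  by (auto simp: teval_tpow power_inverse teval_funpow_Mul)

lemma aug_Amat: "aug (Amat i j) = (1 - mu) * cord frame i j"
  using teval_Amat_cord_eval[OF frame_GL] .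

lemma aug_phi_braid_Amat:
  assumes "i \<in> {1..n}" "j \<in> {1..n}"
  shows "aug (phi_braid B (Amat i j)) = (1 - mu) * (inverse (lam_diag i) * lam_diag j * cord frame i j)"
proof (cases "i = j")
  case True
  hence "phi_braid B (Amat i j) = Amat i j"
    unfolding Amat_def Sub_def Neg_def phi_braid_def by (induction B) auto
  thus ?thesis using True aug_Amat frame_GL lam_diag_nonzero by simp
next
  case False
  have "aug (phi_braid B (Amat i j)) = teval (cord_eval (braid_act B frame)) lam0 mu 1 (Amat i j)"
    using teval_phi_braid_cord_eval[OF frame_GL Amat_offdiag[OF False]] .
  thus ?thesis using teval_Amat_cord_eval braid_act_GL[OF frame_GL] cord_braid_act_frame[OF assms] by simp
qed

lemma aug_dB_rhs:
  assumes "i \<in> {1..n}" "j \<in> {1..n}"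
  shows "aug (dB_rhs n B i j) = 0"
proof -
  have "aug (mmul n (mmul n (Lmat n B) (\<lambda>i j. phi_braid B (Amat i j))) (Linv n B) i j)
     = (\<Sum>l\<in>{1..n}. (\<Sum>k\<in>{1..n}. (if i = k then lam_diag i else 0) * aug (phi_braid B (Amat k l)))
          * (if l = j then inverse (lam_diag l) else 0))"
    by (simp add: teval_mmul teval_Lmat teval_Linv)
  also have "\<dots> = lam_diag i * aug (phi_braid B (Amat i j)) * inverse (lam_diag j)"
    using assms by (simp add: sum_mult_delta_left sum_mult_delta_right)
  also have "\<dots> = aug (Amat i j)"
    using lam_diag_nonzero[of i] lam_diag_nonzero[of j]
    by (simp add: aug_phi_braid_Amat[OF assms] aug_Amat field_simps)
  finally show ?thesis unfolding dB_rhs_def mminus_def Sub_def Neg_def by simp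
qed

text \<open>Giving the extra strand n + 1 the frame of strand j turns a_{l,n+1} into the value of A_lj,
  so that (PhiL A)_ij becomes the value of phi_B(a_{i,n+1}) on the enlarged frame.\<close>
lemma PhiL_Amat:
  assumes "i \<in> {1..n}" "j \<in> {1..n}"
  shows "(\<Sum>l\<in>{1..n}. aug (PhiL n B i l) * aug (Amat l j)) = inverse (lam_diag i) * aug (Amat i j)"
proof -
  define M where "M = frame(n + 1 := frame j)"
  define t where "t = phi_braid B (a i (n + 1))"
  have M_GL: "\<forall>k. M k \<in> GL" unfolding M_def using frame_GL by auto
  have lin: "linear_left n (n + 1) t"
    unfolding t_def using linear_left_phi_braid[OF valid] assms(1) by (simp add: a_def)
  have coeff: "teval (cord_eval M) lam0 mu 1 (coeffL (n + 1) l t) = aug (coeffL (n + 1) l t)" for l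
    using teval_coeffL_cong[OF lin] cord_eval_fun_upd_avoiding unfolding M_def by blast
  have star: "cord_eval M (Ga l (n + 1)) = aug (Amat l j)" if "l \<in> {1..n}" for l
    using that aug_Amat unfolding M_def by (simp add: cord_def)
  have "(\<Sum>l\<in>{1..n}. aug (coeffL (n + 1) l t) * aug (Amat l j)) = teval (cord_eval M) lam0 mu 1 t"
    using teval_linear_left[OF lin] coeff star by simp
  also have "\<dots> = teval (cord_eval (braid_act B M)) lam0 mu 1 (a i (n + 1))"
    unfolding t_def using teval_phi_braid_cord_eval[OF M_GL] assms(1) by (simp add: a_def offdiag_gen_def)
  also have "\<dots> = (1 - mu) * (minv (braid_act B frame i) * frame j) $$ (0, 0)"
    using assms braid_act_fun_upd_outside[OF valid, of "n + 1"] unfolding M_def by (simp add: a_def cord_def)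
  also have "\<dots> = inverse (lam_diag i) * aug (Amat i j)"
    using braid_act_frame_entry00(1)[OF assms(1)] frame_GL GL_carrier aug_Amat by (simp add: cord_def)
  finally show ?thesis unfolding PhiL_def t_def .
qed

text \<open>As above with the extra strand on the left; mu = 1 is allowed, so the factor 1 - inverse mu
  is removed by multiplying with -mu rather than by division.\<close>
lemma Amat_PhiR:
  assumes "i \<in> {1..n}" "j \<in> {1..n}"
  shows "(\<Sum>k\<in>{1..n}. aug (Amat i k) * aug (PhiR n B k j)) = lam_diag j * aug (Amat i j)"
proof -
  define M where "M = frame(n + 1 := frame i)"
  define t where "t = phi_braid B (a (n + 1) j)"
  define S where "S = (\<Sum>k\<in>{1..n}. cord frame i k * aug (coeffR (n + 1) k t))"
  have M_GL: "\<forall>k. M k \<in> GL" unfolding M_def using frame_GL by auto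
  have lin: "linear_right n (n + 1) t"
    unfolding t_def using linear_right_phi_braid[OF valid] assms(2) by (simp add: a_def)
  have coeff: "teval (cord_eval M) lam0 mu 1 (coeffR (n + 1) k t) = aug (coeffR (n + 1) k t)" for k
    using teval_coeffR_cong[OF lin] cord_eval_fun_upd_avoiding unfolding M_def by blast
  have star: "cord M (n + 1) k = cord frame i k" if "k \<in> {1..n}" for k
    using that unfolding M_def by (simp add: cord_def)
  have "(1 - inverse mu) * S = teval (cord_eval M) lam0 mu 1 t"
    unfolding S_def using teval_linear_right[OF lin] coeff star by (simp add: sum_distrib_left mult.assoc)
  also have "\<dots> = teval (cord_eval (braid_act B M)) lam0 mu 1 (a (n + 1) j)"
    unfolding t_def using teval_phi_braid_cord_eval[OF M_GL] assms(2) by (simp add: a_def offdiag_gen_def)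
  also have "\<dots> = (1 - inverse mu) * (minv (frame i) * braid_act B frame j) $$ (0, 0)"
    using assms braid_act_fun_upd_outside[OF valid, of "n + 1"] unfolding M_def by (simp add: a_def cord_def)
  also have "\<dots> = (1 - inverse mu) * (cord frame i j * lam_diag j)"
    using braid_act_frame_entry00(2)[OF assms(2)] frame_GL GL_carrier by (simp add: cord_def)
  finally have key: "(1 - inverse mu) * S = (1 - inverse mu) * (cord frame i j * lam_diag j)" .
  have mu_factor: "1 - mu = - mu * (1 - inverse mu)" using mu_nonzero by (simp add: field_simps)
  have "(\<Sum>k\<in>{1..n}. aug (Amat i k) * aug (PhiR n B k j)) = (1 - mu) * S"
    unfolding S_def PhiR_def t_def by (simp add: aug_Amat sum_distrib_left mult.assoc)
  also have "\<dots> = - mu * ((1 - inverse mu) * S)" using mu_factor by simp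
  also have "\<dots> = - mu * ((1 - inverse mu) * (cord frame i j * lam_diag j))" by (simp only: key)
  also have "\<dots> = lam_diag j * aug (Amat i j)" unfolding aug_Amat mu_factor by (simp add: algebra_simps)
  finally show ?thesis .
qed

lemma aug_dC_rhs:
  assumes "i \<in> {1..n}" "j \<in> {1..n}"
  shows "aug (dC_rhs n B i j) = 0"
proof -
  have "aug (mmul n (mmul n (Lmat n B) (PhiL n B)) Amat i j)
     = (\<Sum>l\<in>{1..n}. (\<Sum>k\<in>{1..n}. (if i = k then lam_diag i else 0) * aug (PhiL n B k l)) * aug (Amat l j))"
    by (simp add: teval_mmul teval_Lmat)
  also have "\<dots> = lam_diag i * (\<Sum>l\<in>{1..n}. aug (PhiL n B i l) * aug (Amat l j))"
    using assms(1) by (simp add: sum_mult_delta_left sum_distrib_left mult.assoc)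
  also have "\<dots> = aug (Amat i j)" using PhiL_Amat[OF assms] lam_diag_nonzero by simp
  finally show ?thesis
    unfolding dC_rhs_def mminus_def Sub_def Neg_def using teval_Ahat_cord_eval[OF frame_GL] aug_Amat by simp
qed

lemma aug_dD_rhs:
  assumes "i \<in> {1..n}" "j \<in> {1..n}"
  shows "aug (dD_rhs n B i j) = 0"
proof -
  have "aug (mmul n (mmul n Ahat (PhiR n B)) (Linv n B) i j)
     = (\<Sum>l\<in>{1..n}. (\<Sum>k\<in>{1..n}. aug (Amat i k) * aug (PhiR n B k l)) *
          (if l = j then inverse (lam_diag l) else 0))"
    using teval_Ahat_cord_eval[OF frame_GL] aug_Amat by (simp add: teval_mmul teval_Linv)
  also have "\<dots> = aug (Amat i j)"
    using assms Amat_PhiR lam_diag_nonzero by (simp add: sum_mult_delta_right)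
  finally show ?thesis unfolding dD_rhs_def mminus_def Sub_def Neg_def by simp
qed

lemma aug_dE_rhs: "aug (dE_rhs n B i j) = 0"
  unfolding dE_rhs_def mminus_def Sub_def Neg_def Bhat_def Cmat_def Dmat_def by (simp add: teval_mmul)

lemma aug_dF_rhs: "aug (dF_rhs n B i j) = 0"
  unfolding dF_rhs_def mminus_def Sub_def Neg_def Bmat_def Cmat_def Dmat_def by (simp add: teval_mmul)

lemma aug_dga_d: "all_gens (gen_in n) t \<Longrightarrow> aug (dga_d n B t) = 0"
proof (induction t)
  case (Gen g)
  thus ?case by (cases g) (auto simp: Neg_def aug_dB_rhs aug_dC_rhs aug_dD_rhs aug_dE_rhs aug_dF_rhs)
qed auto

lemma is_augmentation_frame: "is_augmentation n B (cord_eval frame) lam0 mu 1"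
proof -
  have "cord_eval frame g = 0" if "gdeg g \<noteq> 0" for g
    using that by (cases g) auto
  thus ?thesis unfolding is_augmentation_def using lam0_nonzero mu_nonzero aug_dga_d by auto
qed

end

theorem theorem5p11:
  fixes n m0 :: nat and B :: braid and X :: "nat \<Rightarrow> complex mat"
    and mu0 lam0 :: complex
  assumes "valid_braid n B" and "closure_is_knot n B"
    and "m0 \<ge> 2"
    and "knot_group_rep n B m0 X"
    and "eval_fword m0 X meridian_word =
           mat m0 m0 (\<lambda>(i, j). if i = j then (if i = 0 then mu0 else 1) else 0)"
    and "eval_fword m0 X (longitude_word n B) $$ (0, 0) = lam0"
    and "\<forall>i < m0. \<forall>j < m0. i \<noteq> j \<longrightarrow> eval_fword m0 X (longitude_word n B) $$ (i, j) = 0"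
  shows "\<exists>e. is_augmentation n B e lam0 mu0 1"
proof -
  interpret gl_setting m0 using assms(3) by unfold_locales simp
  have n_pos: "1 \<le> n" using assms(2) unfolding closure_is_knot_def by auto
  have X1: "X 1 \<in> GL"
    using assms(4) n_pos invertible_mat_in_GL unfolding knot_group_rep_def by auto
  have meridian: "X 1 = diag_first mu0"
    using assms(5) left_mult_one_mat[OF GL_carrier[OF X1]]
    unfolding meridian_word_def diag_first_def eval_fword_def by simp
  have "mu0 \<noteq> 0"
  proof
    assume "mu0 = 0"
    hence "(X 1 * minv (X 1)) $$ (0, 0) = 0"
      using diag_first_mult_index[OF minv_carrier[OF X1], of 0 0] meridian dim_pos by simp
    thus False using X1 dim_pos by simp
  qed
  then interpret knot_rep m0 mu0 n B X lam0
    using assms meridian by unfold_locales auto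
  show ?thesis using is_augmentation_frame by blast
qed

end
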